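(* Let $\phi^k,\phi^{k-1}\in\mathcal{G}_N$ with $\overline{\phi^k}=\overline{\phi^{k-1}}$. Then each of the following two equations has a unique solution $\phi^{k+1}\in\mathcal{G}_N$ (the two solutions being in general different): \[ \frac{\frac32\phi^{k+1}-2\phi^k+\frac12\phi^{k-1}}{\Delta t}=\Delta_N\mu_i^{k+1},\quad i=1,2, \] where \[ \mu_1^{k+1}=-\nabla_N\cdot(|\nabla_N\phi^{k+1}|^2\nabla_N\phi^{k+1})+a\phi^{k+1}+2\Delta_N(2\phi^k-\phi^{k-1})-A\Delta t\,\Delta_N(\phi^{k+1}-\phi^k)+\Delta_N^2\phi^{k+1}, \] \[ \mu_2^{k+1}=-\nabla_N\cdot(|\nabla_N\phi^{k+1}|^2\nabla_N\phi^{k+1})-\varepsilon(2\phi^k-\phi^{k-1})-A\Delta t\,\Delta_N(\phi^{k+1}-\phi^k)+(1+\Delta_N)^2\phi^{k+1}. \] Moreover the schemes are mass conservative: if a sequence $(\phi^k)_{k\ge -1}$ is generated by either scheme from data with $\overline{\phi^0}=\overline{\phi^{-1}}=:\beta_0$, then $\overline{\phi^k}=\beta_0$ for all $k\ge0$.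
   Context: Let $K\in\mathbb{N}$, $N=2K+1$, $h=1/N$, $\Omega=(0,1)^3$, grid points $(ih,jh,kh)$. $\mathcal{G}_N$ is the space of real grid functions on $\mathbb{Z}^3$ that are $N$-periodic in each index; $\langle f,g\rangle=h^3\sum_{i,j,k=0}^{N-1}f_{i,j,k}g_{i,j,k}$ and $\overline f=\langle f,1\rangle$. Each $f\in\mathcal{G}_N$ has discrete Fourier expansion $f_{i,j,k}=\sum_{\ell,m,n=-K}^K\hat f_{\ell,m,n}\exp(2\pi\mathrm{i}(\ell x_i+my_j+nz_k))$; $\mathcal{D}_x$ multiplies coefficients by $2\pi\mathrm{i}\ell$ (similarly $\mathcal{D}_y,\mathcal{D}_z$ with $m,n$), $\nabla_Nf=(\mathcal{D}_xf,\mathcal{D}_yf,\mathcal{D}_zf)$, $\nabla_N\cdot(f_1,f_2,f_3)=\mathcal{D}_xf_1+\mathcal{D}_yf_2+\mathcal{D}_zf_3$, $\Delta_N$ multiplies coefficients by $-4\pi^2(\ell^2+m^2+n^2)$; products such as $|\nabla_N\phi|^2\nabla_N\phi$ are taken pointwise. Parameters: $\Delta t>0$ is the time step, $0<\varepsilon<1$, $a:=1-\varepsilon>0$, and $A\ge0$ is a constant (artificial diffusion coefficient). *)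

theory Defs
  imports "HOL-Analysis.Analysis"
begin

type_synonym grid = "int \<Rightarrow> int \<Rightarrow> int \<Rightarrow> real"

definition Ngrid :: "nat \<Rightarrow> nat" where
  "Ngrid K = 2 * K + 1"

definition grid_space :: "nat \<Rightarrow> grid set" where
  "grid_space K = {f. \<forall>i j k.
      f (i + int (Ngrid K)) j k = f i j k \<and>
      f i (j + int (Ngrid K)) k = f i j k \<and>
      f i j (k + int (Ngrid K)) = f i j k}"

definition ginner :: "nat \<Rightarrow> grid \<Rightarrow> grid \<Rightarrow> real" where
  "ginner K f g = (1 / real (Ngrid K)) ^ 3 *
     (\<Sum>i\<in>{0..<int (Ngrid K)}. \<Sum>j\<in>{0..<int (Ngrid K)}. \<Sum>k\<in>{0..<int (Ngrid K)}.
        f i j k * g i j k)"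

definition gmean :: "nat \<Rightarrow> grid \<Rightarrow> real" where
  "gmean K f = ginner K f (\<lambda>_ _ _. 1)"

text \<open>Discrete Fourier coefficients: f_{ijk} = sum_{l,m,n=-K}^K fhat_{lmn} exp(2 pi i (l x_i + m y_j + n z_k)),
  with x_i = i h = i/N.\<close>
definition dft :: "nat \<Rightarrow> grid \<Rightarrow> int \<Rightarrow> int \<Rightarrow> int \<Rightarrow> complex" where
  "dft K f l m n = (1 / of_nat (Ngrid K)) ^ 3 *
     (\<Sum>i\<in>{0..<int (Ngrid K)}. \<Sum>j\<in>{0..<int (Ngrid K)}. \<Sum>k\<in>{0..<int (Ngrid K)}.
        complex_of_real (f i j k) *
        cis (- 2 * pi * real_of_int (l * i + m * j + n * k) / real (Ngrid K)))"

text \<open>Fourier multiplier operator: multiply the coefficients by sigma(l,m,n) and resynthesize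
  (real part; the result is real for the multipliers used below).\<close>
definition spec_op :: "nat \<Rightarrow> (int \<Rightarrow> int \<Rightarrow> int \<Rightarrow> complex) \<Rightarrow> grid \<Rightarrow> grid" where
  "spec_op K \<sigma> f = (\<lambda>i j k. Re
     (\<Sum>l\<in>{- int K..int K}. \<Sum>m\<in>{- int K..int K}. \<Sum>n\<in>{- int K..int K}.
        \<sigma> l m n * dft K f l m n *
        cis (2 * pi * real_of_int (l * i + m * j + n * k) / real (Ngrid K))))"

definition Dx :: "nat \<Rightarrow> grid \<Rightarrow> grid" where
  "Dx K = spec_op K (\<lambda>l m n. \<i> * complex_of_real (2 * pi * real_of_int l))"
definition Dy :: "nat \<Rightarrow> grid \<Rightarrow> grid" where
  "Dy K = spec_op K (\<lambda>l m n. \<i> * complex_of_real (2 * pi * real_of_int m))"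
definition Dz :: "nat \<Rightarrow> grid \<Rightarrow> grid" where
  "Dz K = spec_op K (\<lambda>l m n. \<i> * complex_of_real (2 * pi * real_of_int n))"

definition Lap :: "nat \<Rightarrow> grid \<Rightarrow> grid" where
  "Lap K = spec_op K (\<lambda>l m n.
     complex_of_real (- 4 * pi ^ 2 * real_of_int (l ^ 2 + m ^ 2 + n ^ 2)))"

definition ndiv :: "nat \<Rightarrow> grid \<Rightarrow> grid \<Rightarrow> grid \<Rightarrow> grid" where
  "ndiv K f1 f2 f3 = (\<lambda>i j k. Dx K f1 i j k + Dy K f2 i j k + Dz K f3 i j k)"

definition plap_term :: "nat \<Rightarrow> grid \<Rightarrow> grid" where
  "plap_term K \<phi> =
     (let gx = Dx K \<phi>; gy = Dy K \<phi>; gz = Dz K \<phi>;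
          s = (\<lambda>i j k. (gx i j k)\<^sup>2 + (gy i j k)\<^sup>2 + (gz i j k)\<^sup>2)
      in ndiv K (\<lambda>i j k. s i j k * gx i j k) (\<lambda>i j k. s i j k * gy i j k)
                (\<lambda>i j k. s i j k * gz i j k))"

text \<open>Chemical potential mu_1^{k+1} (a = 1 - eps).\<close>
definition mu1 :: "nat \<Rightarrow> real \<Rightarrow> real \<Rightarrow> real \<Rightarrow> grid \<Rightarrow> grid \<Rightarrow> grid \<Rightarrow> grid" where
  "mu1 K dt eps A \<phi> \<phi>k \<phi>km1 = (\<lambda>i j k.
      - plap_term K \<phi> i j k
      + (1 - eps) * \<phi> i j k
      + 2 * Lap K (\<lambda>i j k. 2 * \<phi>k i j k - \<phi>km1 i j k) i j k
      - A * dt * Lap K (\<lambda>i j k. \<phi> i j k - \<phi>k i j k) i j k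
      + Lap K (Lap K \<phi>) i j k)"

text \<open>Chemical potential mu_2^{k+1}; (1 + Delta_N)^2 phi = phi + 2 Delta_N phi + Delta_N(Delta_N phi).\<close>
definition mu2 :: "nat \<Rightarrow> real \<Rightarrow> real \<Rightarrow> real \<Rightarrow> grid \<Rightarrow> grid \<Rightarrow> grid \<Rightarrow> grid" where
  "mu2 K dt eps A \<phi> \<phi>k \<phi>km1 = (\<lambda>i j k.
      - plap_term K \<phi> i j k
      - eps * (2 * \<phi>k i j k - \<phi>km1 i j k)
      - A * dt * Lap K (\<lambda>i j k. \<phi> i j k - \<phi>k i j k) i j k
      + (\<phi> i j k + 2 * Lap K \<phi> i j k + Lap K (Lap K \<phi>) i j k))"

definition mu_scheme :: "nat \<Rightarrow> nat \<Rightarrow> real \<Rightarrow> real \<Rightarrow> real \<Rightarrow> grid \<Rightarrow> grid \<Rightarrow> grid \<Rightarrow> grid" where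
  "mu_scheme s K = (if s = 1 then mu1 K else mu2 K)"

definition scheme :: "nat \<Rightarrow> nat \<Rightarrow> real \<Rightarrow> real \<Rightarrow> real \<Rightarrow> grid \<Rightarrow> grid \<Rightarrow> grid \<Rightarrow> bool" where
  "scheme s K dt eps A \<phi> \<phi>k \<phi>km1 \<longleftrightarrow>
     (\<lambda>i j k. (3 / 2 * \<phi> i j k - 2 * \<phi>k i j k + 1 / 2 * \<phi>km1 i j k) / dt)
       = Lap K (mu_scheme s K dt eps A \<phi> \<phi>k \<phi>km1)"

end

(* Writing gamma = 3/(2 dt) and c = (4 phi^k - phi^(k-1))/3, either scheme reads
   gamma (phi - c) = Delta_N mu(phi) with mu(phi) = -div_N (|grad_N phi|^2 grad_N phi) + L phi + h,
   where h depends only on phi^k, phi^(k-1) and L is the Fourier multiplier with symbol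
   (1 - eps) - A dt lambda + lambda^2, resp. (1 + lambda)^2 - A dt lambda; here
   lambda = -4 pi^2 (l^2 + m^2 + n^2) <= 0 is the symbol of Delta_N, so L >= 0.

   Uniqueness: for two solutions put w = phi - psi and v = mu(phi) - mu(psi).  Then
   Delta_N v = gamma w, so <Delta_N v, v> = gamma <w, v>.  The left side is <= 0, the right side
   is >= 0 because xi |-> |xi|^2 xi is monotone on R^3 and L >= 0; hence Delta_N v = 0 and w = 0.

   Existence: on the finite-dimensional space of mean-zero grid functions u the energy
   gamma/2 <(-Delta_N)^(-1) u, u> + 1/4 |grad_N (c + u)|_4^4 + 1/2 <L (c + u), c + u> + <h, c + u>
   is continuous and coercive, hence has a minimizer.  Its Euler-Lagrange equation says that
   gamma (-Delta_N)^(-1) u + mu(c + u) is orthogonal to all mean-zero functions, i.e. constant;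
   applying Delta_N gives gamma u = Delta_N mu(c + u), so phi = c + u solves the scheme.

   Mass conservation: Delta_N annihilates means, so the means m_k satisfy
   3 m_(k+1) - 4 m_k + m_(k-1) = 0, and m_0 = m_(-1) forces m_k = m_0. *)

theory Submission
  imports Defs
begin

section \<open>Discrete Fourier analysis on the periodic grid\<close>

lemma Ngrid_pos: "Ngrid K > 0"
  by (simp add: Ngrid_def)

lemma cis_2pi_fraction_eq_1_iff:
  fixes d :: int and N :: nat
  assumes "N > 0"
  shows "cis (2 * pi * real_of_int d / real N) = 1 \<longleftrightarrow> int N dvd d"
proof
  assume "cis (2 * pi * real_of_int d / real N) = 1"
  then have "cos (2 * pi * real_of_int d / real N) = 1"
    by (metis cis.sel(1) one_complex.sel(1))
  then obtain n :: int where "2 * pi * real_of_int d / real N = real_of_int n * 2 * pi"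
    using cos_one_2pi_int by blast
  then have "real_of_int d = real_of_int (n * int N)"
    using assms by (simp add: field_simps)
  then show "int N dvd d"
    by (metis dvd_triv_right of_int_eq_iff)
next
  assume "int N dvd d"
  then obtain e where "d = int N * e"
    by blast
  then have "2 * pi * real_of_int d / real N = 2 * pi * real_of_int e"
    using assms by simp
  then show "cis (2 * pi * real_of_int d / real N) = 1"
    by (simp only:) (rule cis_multiple_2pi, simp)
qed

lemma sum_roots_of_unity:
  fixes d :: int and N :: nat
  assumes "N > 0"
  shows "(\<Sum>t<N. cis (2 * pi * real_of_int (int t * d) / real N))
       = (if int N dvd d then of_nat N else 0)"
proof -
  define z where "z = cis (2 * pi * real_of_int d / real N)"
  have "cis (2 * pi * real_of_int (int t * d) / real N) = z ^ t" for t
  proof -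
    have "z ^ t = cis (real t * (2 * pi * real_of_int d / real N))"
      by (simp add: z_def Complex.DeMoivre)
    also have "real t * (2 * pi * real_of_int d / real N) = 2 * pi * real_of_int (int t * d) / real N"
      by simp
    finally show ?thesis by simp
  qed
  then have sum_powers: "(\<Sum>t<N. cis (2 * pi * real_of_int (int t * d) / real N)) = (\<Sum>t<N. z ^ t)"
    by simp
  have "z ^ N = 1"
    using assms cis_multiple_2pi[of "real_of_int d"] by (simp add: z_def Complex.DeMoivre)
  moreover have "z = 1 \<longleftrightarrow> int N dvd d"
    unfolding z_def by (rule cis_2pi_fraction_eq_1_iff[OF assms])
  ultimately show ?thesis
    using sum_powers by (simp add: sum_gp_strict)
qed

lemma sum_roots_of_unity_interval:
  fixes a d :: int and N :: nat
  assumes "N > 0"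
  shows "(\<Sum>x\<in>{a..<a + int N}. cis (2 * pi * real_of_int (x * d) / real N))
       = (if int N dvd d then of_nat N else 0)"
proof -
  have "(\<Sum>x\<in>{a..<a + int N}. cis (2 * pi * real_of_int (x * d) / real N))
      = (\<Sum>t<N. cis (2 * pi * real_of_int (a * d) / real N)
                 * cis (2 * pi * real_of_int (int t * d) / real N))"
    by (rule sum.reindex_bij_witness[of _ "\<lambda>t. a + int t" "\<lambda>x. nat (x - a)"])
       (auto simp: cis_mult add_divide_distrib[symmetric] algebra_simps)
  also have "\<dots> = cis (2 * pi * real_of_int (a * d) / real N)
                 * (if int N dvd d then of_nat N else 0)"
    by (simp only: sum_distrib_left[symmetric] sum_roots_of_unity[OF assms])
  also have "\<dots> = (if int N dvd d then of_nat N else 0)"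
  proof (cases "int N dvd d")
    case True
    then have "cis (2 * pi * real_of_int (a * d) / real N) = 1"
      using cis_2pi_fraction_eq_1_iff[OF assms, of "a * d"] by simp
    then show ?thesis
      using True by simp
  qed simp
  finally show ?thesis .
qed

type_synonym idx3 = "int \<times> int \<times> int"

definition uncurry3 :: "(int \<Rightarrow> int \<Rightarrow> int \<Rightarrow> 'a) \<Rightarrow> idx3 \<Rightarrow> 'a" where
  "uncurry3 f p = f (fst p) (fst (snd p)) (snd (snd p))"

lemma uncurry3_simp [simp]: "uncurry3 f (i, j, k) = f i j k"
  by (simp add: uncurry3_def)

lemma sum_triple:
  "(\<Sum>i\<in>A. \<Sum>j\<in>B. \<Sum>k\<in>C. f i j k) = (\<Sum>p\<in>A \<times> B \<times> C. uncurry3 f p)"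
  by (simp add: sum.cartesian_product uncurry3_def case_prod_unfold)

lemma sum_triple_product:
  fixes a b c :: "int \<Rightarrow> 'a :: comm_semiring_1"
  shows "(\<Sum>p\<in>A \<times> B \<times> C. a (fst p) * b (fst (snd p)) * c (snd (snd p)))
       = (\<Sum>x\<in>A. a x) * (\<Sum>y\<in>B. b y) * (\<Sum>z\<in>C. c z)"
proof -
  have "(\<Sum>x\<in>A. a x) * (\<Sum>y\<in>B. b y) * (\<Sum>z\<in>C. c z)
      = (\<Sum>x\<in>A. a x) * ((\<Sum>y\<in>B. b y) * (\<Sum>z\<in>C. c z))"
    by (rule mult.assoc)
  also have "\<dots> = (\<Sum>x\<in>A. a x) * (\<Sum>y\<in>B. \<Sum>z\<in>C. b y * c z)"
    by (simp only: sum_product)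
  also have "\<dots> = (\<Sum>x\<in>A. \<Sum>y\<in>B. \<Sum>z\<in>C. a x * (b y * c z))"
    by (simp only: sum_distrib_right) (simp only: sum_distrib_left)
  also have "\<dots> = (\<Sum>p\<in>A \<times> B \<times> C. uncurry3 (\<lambda>x y z. a x * (b y * c z)) p)"
    by (rule sum_triple)
  finally show ?thesis by (simp add: uncurry3_def mult.assoc)
qed

definition grid_box :: "nat \<Rightarrow> idx3 set" where
  "grid_box K = {0..<int (Ngrid K)} \<times> {0..<int (Ngrid K)} \<times> {0..<int (Ngrid K)}"

definition mode_box :: "nat \<Rightarrow> idx3 set" where
  "mode_box K = {- int K..int K} \<times> {- int K..int K} \<times> {- int K..int K}"

definition dot3 :: "idx3 \<Rightarrow> idx3 \<Rightarrow> int" where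
  "dot3 q p = fst q * fst p + fst (snd q) * fst (snd p) + snd (snd q) * snd (snd p)"

definition wave :: "nat \<Rightarrow> idx3 \<Rightarrow> idx3 \<Rightarrow> complex" where
  "wave K q p = cis (2 * pi * real_of_int (dot3 q p) / real (Ngrid K))"

definition dft3 :: "nat \<Rightarrow> grid \<Rightarrow> idx3 \<Rightarrow> complex" where
  "dft3 K f = uncurry3 (dft K f)"

definition cell_volume :: "nat \<Rightarrow> real" where
  "cell_volume K = (1 / real (Ngrid K)) ^ 3"

lemma finite_grid_box [simp]: "finite (grid_box K)"
  by (simp add: grid_box_def)

lemma finite_mode_box [simp]: "finite (mode_box K)"
  by (simp add: mode_box_def)

lemma zero_in_mode_box [simp]: "0 \<in> mode_box K"
  by (simp add: mode_box_def zero_prod_def)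

lemma uminus_in_mode_box: "q \<in> mode_box K \<Longrightarrow> - q \<in> mode_box K"
  by (cases q) (auto simp: mode_box_def)

lemma cell_volume_pos: "cell_volume K > 0"
  using Ngrid_pos[of K] by (simp add: cell_volume_def)

lemma cell_volume_mult_card: "complex_of_real (cell_volume K) * of_nat (Ngrid K) ^ 3 = 1"
  using Ngrid_pos[of K] by (simp add: cell_volume_def field_simps)

lemma wave_zero [simp]: "wave K 0 p = 1"
  by (simp add: wave_def dot3_def)

lemma wave_commute: "wave K q p = wave K p q"
  by (simp add: wave_def dot3_def mult.commute)

lemma wave_uminus: "wave K (- q) p = cnj (wave K q p)"
proof -
  have "real_of_int (dot3 (- q) p) = - real_of_int (dot3 q p)"
    by (simp add: dot3_def)
  then show ?thesis by (simp add: wave_def cis_cnj)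
qed

lemma wave_mult_cnj: "wave K q p * cnj (wave K q' p) = wave K (q - q') p"
  by (simp add: wave_def dot3_def cis_cnj cis_mult algebra_simps diff_divide_distrib)

definition wave1 :: "nat \<Rightarrow> int \<Rightarrow> int \<Rightarrow> complex" where
  "wave1 K d x = cis (2 * pi * real_of_int (x * d) / real (Ngrid K))"

lemma sum_wave1: "(\<Sum>x\<in>{0..<int (Ngrid K)}. wave1 K d x)
       = (if int (Ngrid K) dvd d then of_nat (Ngrid K) else 0)"
  using sum_roots_of_unity_interval[OF Ngrid_pos[of K], where a = 0 and d = d] by (simp add: wave1_def)

(* The modes -K..K form one full period of length N = 2K + 1. *)
lemma sum_wave1_modes: "(\<Sum>x\<in>{- int K..int K}. wave1 K d x)
       = (if int (Ngrid K) dvd d then of_nat (Ngrid K) else 0)"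
proof -
  have "{- int K..int K} = {- int K..<- int K + int (Ngrid K)}"
    by (auto simp: Ngrid_def)
  then show ?thesis
    using sum_roots_of_unity_interval[OF Ngrid_pos[of K], where a = "- int K" and d = d] by (simp add: wave1_def)
qed

lemma wave_factor:
  "wave K d p = wave1 K (fst d) (fst p) * wave1 K (fst (snd d)) (fst (snd p))
              * wave1 K (snd (snd d)) (snd (snd p))"
  by (simp add: wave_def wave1_def dot3_def cis_mult add_divide_distrib algebra_simps)

lemma ginner_eq_sum:
  "ginner K f g = cell_volume K * (\<Sum>p\<in>grid_box K. uncurry3 f p * uncurry3 g p)"
  by (simp add: ginner_def grid_box_def sum_triple cell_volume_def uncurry3_def)

lemma ginner_commute: "ginner K f g = ginner K g f"
  by (simp add: ginner_def mult.commute)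

lemma dft3_eq_sum:
  "dft3 K f q = cell_volume K * (\<Sum>p\<in>grid_box K. complex_of_real (uncurry3 f p) * cnj (wave K q p))"
proof -
  have "cis (- 2 * pi * real_of_int (fst q * i + fst (snd q) * j + snd (snd q) * k) / real (Ngrid K))
      = cnj (wave K q (i, j, k))" for i j k
    by (simp add: wave_def dot3_def cis_cnj)
  then show ?thesis
    by (simp add: dft3_def uncurry3_def dft_def grid_box_def sum_triple cell_volume_def)
qed

lemma spec_op_eq_sum:
  "spec_op K \<sigma> f i j k = Re (\<Sum>q\<in>mode_box K. uncurry3 \<sigma> q * dft3 K f q * wave K q (i, j, k))"
  unfolding spec_op_def mode_box_def sum_triple
  by (rule arg_cong[where f = Re], rule sum.cong)
     (auto simp: uncurry3_def dft3_def wave_def dot3_def)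

lemma dft3_zero: "dft3 K f 0 = complex_of_real (gmean K f)"
  by (simp add: gmean_def ginner_eq_sum dft3_eq_sum uncurry3_def)

lemma dft3_uminus: "dft3 K f (- q) = cnj (dft3 K f q)"
  by (simp add: dft3_eq_sum wave_uminus uncurry3_def)

lemma sum_wave_grid_box:
  assumes "q \<in> mode_box K" "q' \<in> mode_box K"
  shows "(\<Sum>p\<in>grid_box K. wave K q p * cnj (wave K q' p))
       = (if q = q' then of_nat (Ngrid K) ^ 3 else 0)"
proof -
  have small: "int (Ngrid K) dvd x - y \<longleftrightarrow> x = y"
    if "x \<in> {- int K..int K}" "y \<in> {- int K..int K}" for x y
  proof
    assume "int (Ngrid K) dvd x - y"
    then show "x = y"
      using that dvd_imp_le_int[of "x - y" "int (Ngrid K)"] by (force simp: Ngrid_def)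
  qed simp
  have "(\<Sum>p\<in>grid_box K. wave K q p * cnj (wave K q' p)) = (\<Sum>p\<in>grid_box K. wave K (q - q') p)"
    by (simp add: wave_mult_cnj)
  also have "\<dots> = (if int (Ngrid K) dvd fst q - fst q' then of_nat (Ngrid K) else 0)
                 * (if int (Ngrid K) dvd fst (snd q) - fst (snd q') then of_nat (Ngrid K) else 0)
                 * (if int (Ngrid K) dvd snd (snd q) - snd (snd q') then of_nat (Ngrid K) else 0)"
    unfolding wave_factor grid_box_def sum_triple_product sum_wave1 by simp
  also have "\<dots> = (if q = q' then of_nat (Ngrid K) ^ 3 else 0)"
    using assms small by (auto simp: mode_box_def prod_eq_iff power3_eq_cube)
  finally show ?thesis .
qed

lemma periodic_mod:
  fixes g :: "int \<Rightarrow> 'a"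
  assumes "\<And>x. g (x + n) = g x"
  shows "g (x mod n) = g x"
proof -
  have "g (y + t * n) = g y" for y t
  proof (induction t rule: int_induct[where k = 0])
    case (step1 t)
    then show ?case using assms[of "y + t * n"] by (simp add: distrib_right add.assoc)
  next
    case (step2 t)
    then show ?case using assms[of "y + (t - 1) * n"] by (simp add: algebra_simps)
  qed simp
  from this[of "x mod n" "x div n"] show ?thesis
    by simp
qed

lemma grid_space_mod:
  assumes "f \<in> grid_space K"
  shows "f (i mod int (Ngrid K)) (j mod int (Ngrid K)) (k mod int (Ngrid K)) = f i j k"
  using assms periodic_mod[of "\<lambda>x. f x _ _"] periodic_mod[of "\<lambda>x. f _ x _"]
    periodic_mod[of "\<lambda>x. f _ _ x"]
  by (simp add: grid_space_def)

lemma mod_in_grid_box: "(i mod int (Ngrid K), j mod int (Ngrid K), k mod int (Ngrid K)) \<in> grid_box K"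
  using Ngrid_pos[of K] by (simp add: grid_box_def)

lemma sum_wave_mode_box:
  "(\<Sum>q\<in>mode_box K. wave K q p * cnj (wave K q p'))
     = (if int (Ngrid K) dvd fst p - fst p' then of_nat (Ngrid K) else 0)
     * (if int (Ngrid K) dvd fst (snd p) - fst (snd p') then of_nat (Ngrid K) else 0)
     * (if int (Ngrid K) dvd snd (snd p) - snd (snd p') then of_nat (Ngrid K) else 0)"
proof -
  have "(\<Sum>q\<in>mode_box K. wave K q p * cnj (wave K q p')) = (\<Sum>q\<in>mode_box K. wave K (p - p') q)"
    by (simp add: wave_commute[of K _ p] wave_commute[of K _ p'] wave_mult_cnj)
  then show ?thesis
    by (simp only: wave_factor mode_box_def sum_triple_product sum_wave1_modes fst_diff snd_diff)
qed

lemma fourier_inversion: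
  assumes "f \<in> grid_space K"
  shows "complex_of_real (f i j k) = (\<Sum>q\<in>mode_box K. dft3 K f q * wave K q (i, j, k))"
proof -
  define n where "n = int (Ngrid K)"
  define p where "p = (i mod n, j mod n, k mod n)"
  have p_box: "p \<in> grid_box K"
    using mod_in_grid_box by (simp add: p_def n_def)
  have delta: "(\<Sum>q\<in>mode_box K. wave K q (i, j, k) * cnj (wave K q p'))
             = (if p' = p then of_nat (Ngrid K) ^ 3 else 0)" if "p' \<in> grid_box K" for p'
  proof -
    obtain a b c where p': "p' = (a, b, c)" by (cases p')
    have "0 \<le> a" "a < n" "0 \<le> b" "b < n" "0 \<le> c" "c < n"
      using that by (auto simp: p' grid_box_def n_def)
    then have "n dvd i - a \<longleftrightarrow> a = i mod n" "n dvd j - b \<longleftrightarrow> b = j mod n"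
              "n dvd k - c \<longleftrightarrow> c = k mod n"
      by (auto simp: mod_eq_dvd_iff[symmetric])
    then show ?thesis
      by (auto simp: sum_wave_mode_box p' p_def n_def[symmetric] power3_eq_cube)
  qed
  have "(\<Sum>q\<in>mode_box K. dft3 K f q * wave K q (i, j, k))
      = (\<Sum>p'\<in>grid_box K. complex_of_real (cell_volume K) * complex_of_real (uncurry3 f p')
           * (\<Sum>q\<in>mode_box K. wave K q (i, j, k) * cnj (wave K q p')))"
    by (simp add: dft3_eq_sum sum_distrib_left sum_distrib_right sum.swap[of _ "mode_box K"] mult_ac)
  also have "\<dots> = (\<Sum>p'\<in>grid_box K. if p' = p then complex_of_real (cell_volume K)
                      * complex_of_real (uncurry3 f p') * of_nat (Ngrid K) ^ 3 else 0)"
    by (rule sum.cong) (simp_all add: delta)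
  also have "\<dots> = complex_of_real (cell_volume K) * of_nat (Ngrid K) ^ 3 * complex_of_real (uncurry3 f p)"
    using p_box by (simp add: mult_ac)
  also have "uncurry3 f p = f i j k"
    using grid_space_mod[OF assms] by (simp add: p_def n_def)
  finally show ?thesis
    by (simp add: cell_volume_mult_card)
qed

lemma spec_op_in_grid_space: "spec_op K \<sigma> f \<in> grid_space K"
proof -
  have shift: "wave K q p' = wave K q p" if "dot3 q p' = dot3 q p + int (Ngrid K) * t" for q p p' t
  proof -
    have "2 * pi * real_of_int (dot3 q p') / real (Ngrid K)
        = 2 * pi * real_of_int (dot3 q p) / real (Ngrid K) + 2 * pi * real_of_int t"
      using that Ngrid_pos[of K] by (simp add: field_simps)
    moreover have "cis (2 * pi * real_of_int t) = 1"
      by (rule cis_multiple_2pi) simp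
    ultimately show ?thesis
      by (simp add: wave_def cis_mult[symmetric])
  qed
  have "wave K q (i + int (Ngrid K), j, k) = wave K q (i, j, k)"
       "wave K q (i, j + int (Ngrid K), k) = wave K q (i, j, k)"
       "wave K q (i, j, k + int (Ngrid K)) = wave K q (i, j, k)" for q i j k
    by (rule shift[where t = "fst q"], simp add: dot3_def algebra_simps,
        rule shift[where t = "fst (snd q)"], simp add: dot3_def algebra_simps,
        rule shift[where t = "snd (snd q)"], simp add: dot3_def algebra_simps)
  then show ?thesis
    by (simp add: grid_space_def spec_op_eq_sum)
qed

section \<open>Fourier multipliers\<close>

definition hermitian_symbol :: "(int \<Rightarrow> int \<Rightarrow> int \<Rightarrow> complex) \<Rightarrow> bool" where
  "hermitian_symbol \<sigma> \<longleftrightarrow> (\<forall>l m n. \<sigma> (- l) (- m) (- n) = cnj (\<sigma> l m n))"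

lemma hermitian_symbol_of_real:
  "(\<And>l m n. s (- l) (- m) (- n) = s l m n) \<Longrightarrow> hermitian_symbol (\<lambda>l m n. complex_of_real (s l m n))"
  by (simp add: hermitian_symbol_def)

(* spec_op keeps only real parts; for a Hermitian symbol nothing is lost. *)
lemma spec_op_complex:
  assumes "hermitian_symbol \<sigma>"
  shows "complex_of_real (uncurry3 (spec_op K \<sigma> f) p)
       = (\<Sum>q\<in>mode_box K. uncurry3 \<sigma> q * dft3 K f q * wave K q p)"
proof -
  let ?S = "\<Sum>q\<in>mode_box K. uncurry3 \<sigma> q * dft3 K f q * wave K q p"
  have "cnj ?S = (\<Sum>q\<in>mode_box K. uncurry3 \<sigma> (- q) * dft3 K f (- q) * wave K (- q) p)"
    using assms by (simp add: hermitian_symbol_def uncurry3_def dft3_uminus wave_uminus)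
  also have "\<dots> = ?S"
    by (rule sum.reindex_bij_witness[of _ uminus uminus]) (auto simp: uminus_in_mode_box)
  finally have "?S \<in> \<real>"
    by (simp add: Reals_cnj_iff)
  moreover have "uncurry3 (spec_op K \<sigma> f) p = Re ?S"
    by (simp only: uncurry3_def spec_op_eq_sum prod.collapse)
  ultimately show ?thesis
    by (simp only: of_real_Re)
qed

lemma dft3_spec_op:
  assumes "hermitian_symbol \<sigma>" "q \<in> mode_box K"
  shows "dft3 K (spec_op K \<sigma> f) q = uncurry3 \<sigma> q * dft3 K f q"
proof -
  define c where "c q' = uncurry3 \<sigma> q' * dft3 K f q'" for q'
  have "dft3 K (spec_op K \<sigma> f) q
      = cell_volume K * (\<Sum>p\<in>grid_box K. (\<Sum>q'\<in>mode_box K. c q' * wave K q' p) * cnj (wave K q p))"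
    by (simp add: dft3_eq_sum spec_op_complex[OF assms(1)] c_def)
  also have "\<dots> = cell_volume K * (\<Sum>q'\<in>mode_box K. c q' * (\<Sum>p\<in>grid_box K. wave K q' p * cnj (wave K q p)))"
    by (simp add: sum_distrib_left sum_distrib_right mult.assoc sum.swap[of _ "grid_box K"])
  also have "\<dots> = cell_volume K * (\<Sum>q'\<in>mode_box K. if q' = q then c q' * of_nat (Ngrid K) ^ 3 else 0)"
    by (rule arg_cong[where f = "\<lambda>x. _ * x"], rule sum.cong) (simp_all add: sum_wave_grid_box assms(2))
  also have "\<dots> = c q"
    using assms(2) cell_volume_mult_card[of K] by (simp add: mult_ac)
  finally show ?thesis
    by (simp add: c_def)
qed

lemma spec_op_compose:
  assumes "hermitian_symbol \<tau>"
  shows "spec_op K \<sigma> (spec_op K \<tau> f) = spec_op K (\<lambda>l m n. \<sigma> l m n * \<tau> l m n) f"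
proof (intro ext)
  fix i j k
  show "spec_op K \<sigma> (spec_op K \<tau> f) i j k = spec_op K (\<lambda>l m n. \<sigma> l m n * \<tau> l m n) f i j k"
    unfolding spec_op_eq_sum[of K \<sigma> "spec_op K \<tau> f"] spec_op_eq_sum[of K "\<lambda>l m n. \<sigma> l m n * \<tau> l m n" f]
    by (rule arg_cong[where f = Re], rule sum.cong) (simp_all add: dft3_spec_op[OF assms] uncurry3_def mult_ac)
qed

lemma spec_op_linear:
  "spec_op K \<sigma> (\<lambda>i j k. a * f i j k + b * g i j k) i j k
     = a * spec_op K \<sigma> f i j k + b * spec_op K \<sigma> g i j k"
proof -
  have "dft3 K (\<lambda>i j k. a * f i j k + b * g i j k) q
      = complex_of_real a * dft3 K f q + complex_of_real b * dft3 K g q" for q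
    by (simp add: dft3_eq_sum uncurry3_def sum.distrib sum_distrib_left algebra_simps)
  then have "(\<Sum>q\<in>mode_box K. uncurry3 \<sigma> q * dft3 K (\<lambda>i j k. a * f i j k + b * g i j k) q * wave K q (i, j, k))
      = complex_of_real a * (\<Sum>q\<in>mode_box K. uncurry3 \<sigma> q * dft3 K f q * wave K q (i, j, k))
      + complex_of_real b * (\<Sum>q\<in>mode_box K. uncurry3 \<sigma> q * dft3 K g q * wave K q (i, j, k))"
    by (simp add: algebra_simps sum.distrib sum_distrib_left)
  then show ?thesis
    by (simp add: spec_op_eq_sum)
qed

lemma spec_op_diff:
  "spec_op K \<sigma> (\<lambda>i j k. f i j k - g i j k) i j k = spec_op K \<sigma> f i j k - spec_op K \<sigma> g i j k"
  using spec_op_linear[of K \<sigma> 1 f "- 1" g i j k] by simp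

lemma spec_op_add_scaled:
  "spec_op K \<sigma> (\<lambda>i j k. f i j k + t * g i j k) i j k = spec_op K \<sigma> f i j k + t * spec_op K \<sigma> g i j k"
  using spec_op_linear[of K \<sigma> 1 f t g i j k] by simp

lemma spec_op_symbol_linear:
  "spec_op K (\<lambda>l m n. complex_of_real a * \<sigma> l m n + complex_of_real b * \<tau> l m n) f i j k
     = a * spec_op K \<sigma> f i j k + b * spec_op K \<tau> f i j k"
proof -
  have "(\<Sum>q\<in>mode_box K. uncurry3 (\<lambda>l m n. complex_of_real a * \<sigma> l m n + complex_of_real b * \<tau> l m n) q
            * dft3 K f q * wave K q (i, j, k))
      = complex_of_real a * (\<Sum>q\<in>mode_box K. uncurry3 \<sigma> q * dft3 K f q * wave K q (i, j, k))
      + complex_of_real b * (\<Sum>q\<in>mode_box K. uncurry3 \<tau> q * dft3 K f q * wave K q (i, j, k))"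
    by (simp add: uncurry3_def algebra_simps sum.distrib sum_distrib_left)
  then show ?thesis
    by (simp add: spec_op_eq_sum)
qed

lemma spec_op_constant_symbol:
  assumes "f \<in> grid_space K"
  shows "spec_op K (\<lambda>l m n. complex_of_real c) f i j k = c * f i j k"
proof -
  have "(\<Sum>q\<in>mode_box K. uncurry3 (\<lambda>l m n. complex_of_real c) q * dft3 K f q * wave K q (i, j, k))
      = complex_of_real c * (\<Sum>q\<in>mode_box K. dft3 K f q * wave K q (i, j, k))"
    by (simp add: uncurry3_def sum_distrib_left mult_ac)
  also have "\<dots> = complex_of_real (c * f i j k)"
    by (simp add: fourier_inversion[OF assms])
  finally show ?thesis
    by (simp only: spec_op_eq_sum Re_complex_of_real)
qed

lemma spec_op_const:
  assumes "\<sigma> 0 0 0 = 0"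
  shows "spec_op K \<sigma> (\<lambda>_ _ _. c) i j k = 0"
proof -
  have "dft3 K (\<lambda>_ _ _. c) q = (if q = 0 then complex_of_real c else 0)" if "q \<in> mode_box K" for q
  proof -
    have "dft3 K (\<lambda>_ _ _. c) q = complex_of_real c
          * (complex_of_real (cell_volume K) * (\<Sum>p\<in>grid_box K. wave K 0 p * cnj (wave K q p)))"
      by (simp add: dft3_eq_sum uncurry3_def sum_distrib_left mult_ac)
    also have "\<dots> = complex_of_real c
          * (complex_of_real (cell_volume K) * (if 0 = q then of_nat (Ngrid K) ^ 3 else 0))"
      by (simp only: sum_wave_grid_box[OF zero_in_mode_box that])
    also have "\<dots> = (if q = 0 then complex_of_real c else 0)"
      using cell_volume_mult_card[of K] by auto
    finally show ?thesis .
  qed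
  then have "(\<Sum>q\<in>mode_box K. uncurry3 \<sigma> q * dft3 K (\<lambda>_ _ _. c) q * wave K q (i, j, k)) = 0"
    using assms by (intro sum.neutral) (simp add: zero_prod_def)
  then show ?thesis
    by (simp add: spec_op_eq_sum)
qed

lemma gmean_spec_op:
  assumes "hermitian_symbol \<sigma>" "\<sigma> 0 0 0 = 0"
  shows "gmean K (spec_op K \<sigma> f) = 0"
proof -
  have "complex_of_real (gmean K (spec_op K \<sigma> f)) = uncurry3 \<sigma> 0 * dft3 K f 0"
    by (simp only: dft3_zero[symmetric] dft3_spec_op[OF assms(1) zero_in_mode_box])
  moreover have "uncurry3 \<sigma> 0 = 0"
    using assms(2) by (simp add: zero_prod_def)
  ultimately show ?thesis
    by simp
qed

lemma ginner_spec_op: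
  "ginner K (spec_op K \<sigma> f) g = Re (\<Sum>q\<in>mode_box K. uncurry3 \<sigma> q * dft3 K f q * cnj (dft3 K g q))"
proof -
  define a where "a q = uncurry3 \<sigma> q * dft3 K f q" for q
  have Re_scale: "Re (complex_of_real r * z) = r * Re z" for r z
    by simp
  have "ginner K (spec_op K \<sigma> f) g
      = cell_volume K * (\<Sum>p\<in>grid_box K. Re (\<Sum>q\<in>mode_box K. a q * wave K q p) * uncurry3 g p)"
    by (simp add: ginner_eq_sum uncurry3_def spec_op_eq_sum a_def)
  also have "\<dots> = cell_volume K * (\<Sum>p\<in>grid_box K.
      Re (\<Sum>q\<in>mode_box K. a q * (complex_of_real (uncurry3 g p) * wave K q p)))"
  proof -
    have "(\<Sum>q\<in>mode_box K. a q * (complex_of_real (uncurry3 g p) * wave K q p))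
        = complex_of_real (uncurry3 g p) * (\<Sum>q\<in>mode_box K. a q * wave K q p)" for p
      by (simp add: sum_distrib_left mult.left_commute)
    then show ?thesis
      by (simp only: Re_scale mult.commute)
  qed
  also have "\<dots> = Re (complex_of_real (cell_volume K)
      * (\<Sum>p\<in>grid_box K. \<Sum>q\<in>mode_box K. a q * (complex_of_real (uncurry3 g p) * wave K q p)))"
    by (simp only: Re_scale Re_sum)
  also have "(\<Sum>p\<in>grid_box K. \<Sum>q\<in>mode_box K. a q * (complex_of_real (uncurry3 g p) * wave K q p))
      = (\<Sum>q\<in>mode_box K. a q * (\<Sum>p\<in>grid_box K. complex_of_real (uncurry3 g p) * wave K q p))"
    by (subst sum.swap) (simp add: sum_distrib_left)
  also have "complex_of_real (cell_volume K) * \<dots> = (\<Sum>q\<in>mode_box K. a q * cnj (dft3 K g q))"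
    by (simp add: dft3_eq_sum sum_distrib_left mult.left_commute)
  finally show ?thesis
    by (simp only: a_def)
qed

lemma spec_op_skew_adjoint:
  "ginner K (spec_op K (\<lambda>l m n. \<i> * complex_of_real (s l m n)) f) g
     = - ginner K f (spec_op K (\<lambda>l m n. \<i> * complex_of_real (s l m n)) g)"
proof -
  have "Re (uncurry3 (\<lambda>l m n. \<i> * complex_of_real (s l m n)) q * dft3 K f q * cnj (dft3 K g q))
      = - Re (uncurry3 (\<lambda>l m n. \<i> * complex_of_real (s l m n)) q * dft3 K g q * cnj (dft3 K f q))" for q
    by (simp add: uncurry3_def algebra_simps)
  then show ?thesis
    by (subst ginner_commute[of K f]) (simp only: ginner_spec_op Re_sum sum_negf)
qed

type_synonym symbol = "int \<Rightarrow> int \<Rightarrow> int \<Rightarrow> real"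

definition real_multiplier :: "nat \<Rightarrow> symbol \<Rightarrow> grid \<Rightarrow> grid" where
  "real_multiplier K s = spec_op K (\<lambda>l m n. complex_of_real (s l m n))"

lemma real_multiplier_symmetric:
  "ginner K (real_multiplier K s f) g = ginner K f (real_multiplier K s g)"
proof -
  have "Re (uncurry3 (\<lambda>l m n. complex_of_real (s l m n)) q * dft3 K f q * cnj (dft3 K g q))
      = Re (uncurry3 (\<lambda>l m n. complex_of_real (s l m n)) q * dft3 K g q * cnj (dft3 K f q))" for q
    by (simp add: uncurry3_def algebra_simps)
  then show ?thesis
    by (subst ginner_commute[of K f]) (simp only: real_multiplier_def ginner_spec_op Re_sum)
qed

lemma ginner_real_multiplier_self:
  "ginner K (real_multiplier K s f) f = (\<Sum>q\<in>mode_box K. uncurry3 s q * (cmod (dft3 K f q))\<^sup>2)"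
proof -
  have "uncurry3 (\<lambda>l m n. complex_of_real (s l m n)) q * dft3 K f q * cnj (dft3 K f q)
      = complex_of_real (uncurry3 s q * (cmod (dft3 K f q))\<^sup>2)" for q
    by (simp only: uncurry3_def mult.assoc complex_norm_square[symmetric] of_real_mult)
  then show ?thesis
    by (simp only: real_multiplier_def ginner_spec_op Re_sum Re_complex_of_real)
qed

lemma real_multiplier_nonneg:
  "(\<And>q. q \<in> mode_box K \<Longrightarrow> uncurry3 s q \<ge> 0) \<Longrightarrow> ginner K (real_multiplier K s f) f \<ge> 0"
  by (simp add: ginner_real_multiplier_self sum_nonneg)

lemma real_multiplier_nonpos:
  "(\<And>q. q \<in> mode_box K \<Longrightarrow> uncurry3 s q \<le> 0) \<Longrightarrow> ginner K (real_multiplier K s f) f \<le> 0"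
  by (simp add: ginner_real_multiplier_self sum_nonpos mult_nonpos_nonneg)

lemma real_multiplier_eq_0:
  assumes nonpos: "\<And>q. q \<in> mode_box K \<Longrightarrow> uncurry3 s q \<le> 0"
    and zero: "ginner K (real_multiplier K s f) f = 0"
  shows "real_multiplier K s f = (\<lambda>_ _ _. 0)"
proof -
  have "(\<Sum>q\<in>mode_box K. - (uncurry3 s q * (cmod (dft3 K f q))\<^sup>2)) = 0"
    using zero by (simp add: ginner_real_multiplier_self sum_negf)
  then have "- (uncurry3 s q * (cmod (dft3 K f q))\<^sup>2) = 0" if "q \<in> mode_box K" for q
    using that nonpos by (subst (asm) sum_nonneg_eq_0_iff) (auto simp: mult_nonpos_nonneg)
  then have "uncurry3 s q = 0 \<or> dft3 K f q = 0" if "q \<in> mode_box K" for q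
    using that by fastforce
  then have "(\<Sum>q\<in>mode_box K. uncurry3 (\<lambda>l m n. complex_of_real (s l m n)) q * dft3 K f q * wave K q (i, j, k)) = 0"
    for i j k
    by (intro sum.neutral) (auto simp: uncurry3_def)
  then show ?thesis
    by (simp add: real_multiplier_def spec_op_eq_sum fun_eq_iff)
qed

lemma ginner_linear_right:
  "ginner K f (\<lambda>i j k. a * g i j k + b * g' i j k) = a * ginner K f g + b * ginner K f g'"
  by (simp add: ginner_eq_sum uncurry3_def sum.distrib sum_distrib_left algebra_simps)

lemma ginner_add_right:
  "ginner K f (\<lambda>i j k. g i j k + g' i j k) = ginner K f g + ginner K f g'"
  using ginner_linear_right[of K f 1 g 1 g'] by simp

lemma ginner_diff_right:
  "ginner K f (\<lambda>i j k. g i j k - g' i j k) = ginner K f g - ginner K f g'"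
  using ginner_linear_right[of K f 1 g "- 1" g'] by simp

lemma ginner_uminus_right: "ginner K f (\<lambda>i j k. - g i j k) = - ginner K f g"
  using ginner_linear_right[of K f "- 1" g 0 g] by simp

lemma ginner_scale_right: "ginner K f (\<lambda>i j k. a * g i j k) = a * ginner K f g"
  using ginner_linear_right[of K f a g 0 g] by simp

lemma ginner_scale_left: "ginner K (\<lambda>i j k. a * f i j k) g = a * ginner K f g"
  by (simp add: ginner_eq_sum uncurry3_def sum_distrib_left algebra_simps)

lemma ginner_self_nonneg: "ginner K f f \<ge> 0"
  by (simp add: ginner_eq_sum sum_nonneg cell_volume_pos less_imp_le)

lemma ginner_self_ge_point:
  assumes "f \<in> grid_space K"
  shows "cell_volume K * (f i j k)\<^sup>2 \<le> ginner K f f"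
proof -
  let ?p = "(i mod int (Ngrid K), j mod int (Ngrid K), k mod int (Ngrid K))"
  have "(f i j k)\<^sup>2 = uncurry3 f ?p * uncurry3 f ?p"
    using grid_space_mod[OF assms] by (simp add: power2_eq_square)
  also have "\<dots> \<le> (\<Sum>p\<in>grid_box K. uncurry3 f p * uncurry3 f p)"
    using mod_in_grid_box by (intro member_le_sum) auto
  finally show ?thesis
    using cell_volume_pos[of K] by (simp add: ginner_eq_sum)
qed

lemma ginner_self_eq_0:
  assumes "f \<in> grid_space K" "ginner K f f = 0"
  shows "f = (\<lambda>_ _ _. 0)"
proof (intro ext)
  fix i j k
  have "cell_volume K * (f i j k)\<^sup>2 \<le> 0"
    using ginner_self_ge_point[OF assms(1)] assms(2) by metis
  then show "f i j k = 0"
    using cell_volume_pos[of K] by (simp add: mult_le_0_iff)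
qed

section \<open>The Laplacian and the nonlinear term\<close>

lemma sum_squares3_pos_iff:
  fixes l m n :: int
  shows "l\<^sup>2 + m\<^sup>2 + n\<^sup>2 > 0 \<longleftrightarrow> \<not> (l = 0 \<and> m = 0 \<and> n = 0)"
  by (smt (verit) power2_less_eq_zero_iff zero_le_power2)

definition lap_symbol :: symbol where
  "lap_symbol l m n = - 4 * pi\<^sup>2 * real_of_int (l\<^sup>2 + m\<^sup>2 + n\<^sup>2)"

lemma Lap_eq_real_multiplier: "Lap K = real_multiplier K lap_symbol"
  by (simp add: Lap_def real_multiplier_def lap_symbol_def)

lemma lap_symbol_nonpos: "lap_symbol l m n \<le> 0"
  by (simp add: lap_symbol_def mult_nonpos_nonneg)

lemma lap_symbol_neg_iff: "lap_symbol l m n < 0 \<longleftrightarrow> \<not> (l = 0 \<and> m = 0 \<and> n = 0)"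
proof -
  have "real_of_int (l\<^sup>2 + m\<^sup>2 + n\<^sup>2) > 0 \<longleftrightarrow> \<not> (l = 0 \<and> m = 0 \<and> n = 0)"
    by (simp only: of_int_0_less_iff sum_squares3_pos_iff)
  moreover have "lap_symbol l m n = - (4 * pi\<^sup>2 * real_of_int (l\<^sup>2 + m\<^sup>2 + n\<^sup>2))"
    by (simp add: lap_symbol_def)
  moreover have "4 * pi\<^sup>2 > 0"
    by simp
  ultimately show ?thesis
    by (simp only: neg_less_0_iff_less zero_less_mult_iff) auto
qed

lemma hermitian_lap_symbol: "hermitian_symbol (\<lambda>l m n. complex_of_real (lap_symbol l m n))"
  by (rule hermitian_symbol_of_real) (simp add: lap_symbol_def)

lemma gmean_Lap: "gmean K (Lap K f) = 0"
  using gmean_spec_op[OF hermitian_lap_symbol] by (simp add: Lap_def lap_symbol_def)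

lemma Lap_const: "Lap K (\<lambda>_ _ _. c) = (\<lambda>_ _ _. 0)"
  by (intro ext) (simp add: Lap_def spec_op_const)

lemma Lap_Lap: "Lap K (Lap K f) = real_multiplier K (\<lambda>l m n. (lap_symbol l m n)\<^sup>2) f"
  by (simp add: Lap_eq_real_multiplier real_multiplier_def spec_op_compose hermitian_lap_symbol
      power2_eq_square)

definition inv_neg_lap_symbol :: symbol where
  "inv_neg_lap_symbol l m n = (if l = 0 \<and> m = 0 \<and> n = 0 then 0 else - 1 / lap_symbol l m n)"

definition inv_neg_Lap :: "nat \<Rightarrow> grid \<Rightarrow> grid" where
  "inv_neg_Lap K = real_multiplier K inv_neg_lap_symbol"

lemma Lap_inv_neg_Lap:
  assumes "u \<in> grid_space K"
  shows "Lap K (inv_neg_Lap K u) i j k = gmean K u - u i j k"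
proof -
  have herm: "hermitian_symbol (\<lambda>l m n. complex_of_real (inv_neg_lap_symbol l m n))"
    by (rule hermitian_symbol_of_real) (simp add: inv_neg_lap_symbol_def lap_symbol_def)
  have symbol: "uncurry3 (\<lambda>l m n. complex_of_real (lap_symbol l m n) * complex_of_real (inv_neg_lap_symbol l m n)) q
      = (if q = 0 then 0 else - 1)" for q
    using lap_symbol_neg_iff[of "fst q" "fst (snd q)" "snd (snd q)"]
    by (cases q) (auto simp: inv_neg_lap_symbol_def zero_prod_def)
  have "Lap K (inv_neg_Lap K u) i j k
      = spec_op K (\<lambda>l m n. complex_of_real (lap_symbol l m n) * complex_of_real (inv_neg_lap_symbol l m n)) u i j k"
    by (simp only: Lap_eq_real_multiplier inv_neg_Lap_def real_multiplier_def spec_op_compose[OF herm])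
  also have "\<dots> = Re (\<Sum>q\<in>mode_box K. (if q = 0 then 0 else - 1) * dft3 K u q * wave K q (i, j, k))"
    by (simp only: spec_op_eq_sum symbol)
  also have "(\<Sum>q\<in>mode_box K. (if q = 0 then 0 else - 1) * dft3 K u q * wave K q (i, j, k))
      = (\<Sum>q\<in>mode_box K. (if q = 0 then dft3 K u q * wave K q (i, j, k) else 0)
                           - dft3 K u q * wave K q (i, j, k))"
    by (rule sum.cong) auto
  also have "\<dots> = complex_of_real (gmean K u - u i j k)"
    by (simp add: sum_subtractf fourier_inversion[OF assms] dft3_zero)
  finally show ?thesis
    by simp
qed

lemma parseval:
  assumes "f \<in> grid_space K"
  shows "ginner K f f = (\<Sum>q\<in>mode_box K. (cmod (dft3 K f q))\<^sup>2)"
proof -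
  have "real_multiplier K (\<lambda>_ _ _. 1) f = f"
    using spec_op_constant_symbol[OF assms, of 1] by (simp add: real_multiplier_def fun_eq_iff)
  then show ?thesis
    using ginner_real_multiplier_self[of K "\<lambda>_ _ _. 1" f] by (simp add: uncurry3_def)
qed

lemma inv_neg_lap_symbol_ge:
  assumes "(l, m, n) \<in> mode_box K" "\<not> (l = 0 \<and> m = 0 \<and> n = 0)"
  shows "1 / (4 * pi\<^sup>2 * (3 * (real K)\<^sup>2 + 1)) \<le> inv_neg_lap_symbol l m n"
proof -
  have "\<bar>l\<bar> \<le> int K" "\<bar>m\<bar> \<le> int K" "\<bar>n\<bar> \<le> int K"
    using assms(1) by (auto simp: mode_box_def)
  then have "l\<^sup>2 \<le> (int K)\<^sup>2" "m\<^sup>2 \<le> (int K)\<^sup>2" "n\<^sup>2 \<le> (int K)\<^sup>2"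
    using abs_le_square_iff[of l "int K"] abs_le_square_iff[of m "int K"]
      abs_le_square_iff[of n "int K"] by simp_all
  then have "real_of_int (l\<^sup>2 + m\<^sup>2 + n\<^sup>2) \<le> 3 * (real K)\<^sup>2 + 1"
    by (simp only: of_int_le_iff[symmetric, where 'a = real]) simp
  moreover have "real_of_int (l\<^sup>2 + m\<^sup>2 + n\<^sup>2) > 0"
    unfolding of_int_0_less_iff sum_squares3_pos_iff by (rule assms(2))
  moreover have "inv_neg_lap_symbol l m n = 1 / (4 * pi\<^sup>2 * real_of_int (l\<^sup>2 + m\<^sup>2 + n\<^sup>2))"
    using assms(2) by (simp add: inv_neg_lap_symbol_def lap_symbol_def)
  ultimately show ?thesis
    by (simp add: frac_le)
qed

lemma inv_neg_Lap_coercive: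
  assumes "u \<in> grid_space K" "gmean K u = 0"
  shows "ginner K u u / (4 * pi\<^sup>2 * (3 * (real K)\<^sup>2 + 1)) \<le> ginner K (inv_neg_Lap K u) u"
proof -
  define \<kappa> :: real where "\<kappa> = 1 / (4 * pi\<^sup>2 * (3 * (real K)\<^sup>2 + 1))"
  have "\<kappa> * (cmod (dft3 K u q))\<^sup>2 \<le> uncurry3 inv_neg_lap_symbol q * (cmod (dft3 K u q))\<^sup>2"
    if "q \<in> mode_box K" for q
  proof (cases "q = 0")
    case True
    then show ?thesis using assms(2) by (simp add: dft3_zero)
  next
    case False
    then have "\<kappa> \<le> uncurry3 inv_neg_lap_symbol q"
      using that inv_neg_lap_symbol_ge[of "fst q" "fst (snd q)" "snd (snd q)" K]
      by (cases q) (auto simp: \<kappa>_def zero_prod_def)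
    then show ?thesis
      by (rule mult_right_mono) simp
  qed
  then have "(\<Sum>q\<in>mode_box K. \<kappa> * (cmod (dft3 K u q))\<^sup>2) \<le> ginner K (inv_neg_Lap K u) u"
    by (simp add: inv_neg_Lap_def ginner_real_multiplier_self sum_mono)
  then show ?thesis
    by (simp add: parseval[OF assms(1)] sum_divide_distrib \<kappa>_def)
qed

lemma D_skew_adjoint:
  "ginner K (Dx K f) g = - ginner K f (Dx K g)"
  "ginner K (Dy K f) g = - ginner K f (Dy K g)"
  "ginner K (Dz K f) g = - ginner K f (Dz K g)"
  by (simp_all only: Dx_def Dy_def Dz_def spec_op_skew_adjoint)

definition grad_sq :: "nat \<Rightarrow> grid \<Rightarrow> grid" where
  "grad_sq K \<phi> = (\<lambda>i j k. (Dx K \<phi> i j k)\<^sup>2 + (Dy K \<phi> i j k)\<^sup>2 + (Dz K \<phi> i j k)\<^sup>2)"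

lemma ginner_plap_term:
  "ginner K w (plap_term K \<phi>) =
     - (ginner K (Dx K w) (\<lambda>i j k. grad_sq K \<phi> i j k * Dx K \<phi> i j k)
      + ginner K (Dy K w) (\<lambda>i j k. grad_sq K \<phi> i j k * Dy K \<phi> i j k)
      + ginner K (Dz K w) (\<lambda>i j k. grad_sq K \<phi> i j k * Dz K \<phi> i j k))"
proof -
  have "ginner K w (plap_term K \<phi>)
      = ginner K w (Dx K (\<lambda>i j k. grad_sq K \<phi> i j k * Dx K \<phi> i j k))
      + ginner K w (Dy K (\<lambda>i j k. grad_sq K \<phi> i j k * Dy K \<phi> i j k))
      + ginner K w (Dz K (\<lambda>i j k. grad_sq K \<phi> i j k * Dz K \<phi> i j k))"
    by (simp only: plap_term_def Let_def ndiv_def grad_sq_def ginner_eq_sum uncurry3_def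
        sum.distrib distrib_left)
  then show ?thesis
    by (simp only: ginner_commute[of K w] D_skew_adjoint minus_add_distrib minus_minus)
qed

lemma cubic_map_monotone:
  fixes a1 a2 a3 b1 b2 b3 :: real
  shows "0 \<le> (a1 - b1) * ((a1\<^sup>2 + a2\<^sup>2 + a3\<^sup>2) * a1 - (b1\<^sup>2 + b2\<^sup>2 + b3\<^sup>2) * b1)
          + (a2 - b2) * ((a1\<^sup>2 + a2\<^sup>2 + a3\<^sup>2) * a2 - (b1\<^sup>2 + b2\<^sup>2 + b3\<^sup>2) * b2)
          + (a3 - b3) * ((a1\<^sup>2 + a2\<^sup>2 + a3\<^sup>2) * a3 - (b1\<^sup>2 + b2\<^sup>2 + b3\<^sup>2) * b3)"
proof -
  define A where "A = a1\<^sup>2 + a2\<^sup>2 + a3\<^sup>2"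
  define B where "B = b1\<^sup>2 + b2\<^sup>2 + b3\<^sup>2"
  have "(a1 - b1) * (A * a1 - B * b1) + (a2 - b2) * (A * a2 - B * b2) + (a3 - b3) * (A * a3 - B * b3)
      = (A + B) / 2 * ((a1 - b1)\<^sup>2 + (a2 - b2)\<^sup>2 + (a3 - b3)\<^sup>2) + (A - B)\<^sup>2 / 2"
    by (simp add: A_def B_def power2_eq_square field_simps)
  moreover have "0 \<le> (A + B) / 2 * ((a1 - b1)\<^sup>2 + (a2 - b2)\<^sup>2 + (a3 - b3)\<^sup>2) + (A - B)\<^sup>2 / 2"
    unfolding A_def B_def by (intro add_nonneg_nonneg mult_nonneg_nonneg divide_nonneg_nonneg) auto
  ultimately show ?thesis
    unfolding A_def[symmetric] B_def[symmetric] by linarith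
qed

lemma plap_term_monotone:
  "ginner K (\<lambda>i j k. \<phi> i j k - \<psi> i j k) (\<lambda>i j k. plap_term K \<psi> i j k - plap_term K \<phi> i j k) \<ge> 0"
proof -
  define w where "w = (\<lambda>i j k. \<phi> i j k - \<psi> i j k)"
  define F1 where "F1 \<xi> = (\<lambda>i j k. grad_sq K \<xi> i j k * Dx K \<xi> i j k)" for \<xi>
  define F2 where "F2 \<xi> = (\<lambda>i j k. grad_sq K \<xi> i j k * Dy K \<xi> i j k)" for \<xi>
  define F3 where "F3 \<xi> = (\<lambda>i j k. grad_sq K \<xi> i j k * Dz K \<xi> i j k)" for \<xi>
  have "ginner K w (\<lambda>i j k. plap_term K \<psi> i j k - plap_term K \<phi> i j k)
      = ginner K (Dx K w) (\<lambda>i j k. F1 \<phi> i j k - F1 \<psi> i j k)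
      + ginner K (Dy K w) (\<lambda>i j k. F2 \<phi> i j k - F2 \<psi> i j k)
      + ginner K (Dz K w) (\<lambda>i j k. F3 \<phi> i j k - F3 \<psi> i j k)"
    by (simp only: ginner_diff_right ginner_plap_term F1_def F2_def F3_def)
  also have "\<dots> = cell_volume K * (\<Sum>p\<in>grid_box K.
        uncurry3 (Dx K w) p * uncurry3 (\<lambda>i j k. F1 \<phi> i j k - F1 \<psi> i j k) p
      + uncurry3 (Dy K w) p * uncurry3 (\<lambda>i j k. F2 \<phi> i j k - F2 \<psi> i j k) p
      + uncurry3 (Dz K w) p * uncurry3 (\<lambda>i j k. F3 \<phi> i j k - F3 \<psi> i j k) p)"
    by (simp only: ginner_eq_sum sum.distrib distrib_left)
  also have "\<dots> \<ge> 0"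
  proof (intro mult_nonneg_nonneg sum_nonneg less_imp_le[OF cell_volume_pos])
    fix p :: idx3
    obtain i j k where p: "p = (i, j, k)"
      by (cases p)
    have "Dx K w i j k = Dx K \<phi> i j k - Dx K \<psi> i j k"
         "Dy K w i j k = Dy K \<phi> i j k - Dy K \<psi> i j k"
         "Dz K w i j k = Dz K \<phi> i j k - Dz K \<psi> i j k"
      by (simp_all only: w_def Dx_def Dy_def Dz_def spec_op_diff)
    then show "0 \<le> uncurry3 (Dx K w) p * uncurry3 (\<lambda>i j k. F1 \<phi> i j k - F1 \<psi> i j k) p
      + uncurry3 (Dy K w) p * uncurry3 (\<lambda>i j k. F2 \<phi> i j k - F2 \<psi> i j k) p
      + uncurry3 (Dz K w) p * uncurry3 (\<lambda>i j k. F3 \<phi> i j k - F3 \<psi> i j k) p"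
      by (simp only: p uncurry3_simp F1_def F2_def F3_def grad_sq_def cubic_map_monotone)
  qed
  finally show ?thesis
    by (simp only: w_def)
qed

section \<open>Uniqueness\<close>

definition chem_potential :: "nat \<Rightarrow> symbol \<Rightarrow> grid \<Rightarrow> grid \<Rightarrow> grid" where
  "chem_potential K s h \<phi> =
     (\<lambda>i j k. - plap_term K \<phi> i j k + real_multiplier K s \<phi> i j k + h i j k)"

definition reduced_scheme :: "nat \<Rightarrow> real \<Rightarrow> symbol \<Rightarrow> grid \<Rightarrow> grid \<Rightarrow> grid \<Rightarrow> bool" where
  "reduced_scheme K \<gamma> s h c \<phi> \<longleftrightarrow>
     Lap K (chem_potential K s h \<phi>) = (\<lambda>i j k. \<gamma> * (\<phi> i j k - c i j k))"

lemma reduced_scheme_unique: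
  assumes "\<gamma> > 0" and s_nonneg: "\<And>q. q \<in> mode_box K \<Longrightarrow> uncurry3 s q \<ge> 0"
    and \<phi>: "reduced_scheme K \<gamma> s h c \<phi>" and \<psi>: "reduced_scheme K \<gamma> s h c \<psi>"
  shows "\<phi> = \<psi>"
proof -
  define w where "w = (\<lambda>i j k. \<phi> i j k - \<psi> i j k)"
  define v where "v = (\<lambda>i j k. chem_potential K s h \<phi> i j k - chem_potential K s h \<psi> i j k)"
  have Lap_v: "Lap K v = (\<lambda>i j k. \<gamma> * w i j k)"
  proof (intro ext)
    fix i j k
    have "Lap K v i j k = Lap K (chem_potential K s h \<phi>) i j k - Lap K (chem_potential K s h \<psi>) i j k"
      by (simp only: v_def Lap_def spec_op_diff)
    then show "Lap K v i j k = \<gamma> * w i j k"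
      using \<phi> \<psi> by (simp add: reduced_scheme_def w_def algebra_simps)
  qed
  have "v = (\<lambda>i j k. (plap_term K \<psi> i j k - plap_term K \<phi> i j k) + real_multiplier K s w i j k)"
    by (simp add: v_def w_def chem_potential_def real_multiplier_def spec_op_diff fun_eq_iff)
  then have "ginner K w v
      = ginner K w (\<lambda>i j k. plap_term K \<psi> i j k - plap_term K \<phi> i j k) + ginner K (real_multiplier K s w) w"
    by (simp only: ginner_add_right ginner_commute[of K w "real_multiplier K s w"])
  moreover have "ginner K w (\<lambda>i j k. plap_term K \<psi> i j k - plap_term K \<phi> i j k) \<ge> 0"
    unfolding w_def by (rule plap_term_monotone)
  moreover have "ginner K (real_multiplier K s w) w \<ge> 0"
    using s_nonneg by (rule real_multiplier_nonneg)
  ultimately have "ginner K (Lap K v) v \<ge> 0"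
    using \<open>\<gamma> > 0\<close> by (simp add: Lap_v ginner_scale_left)
  moreover have "ginner K (Lap K v) v \<le> 0"
    by (simp add: Lap_eq_real_multiplier real_multiplier_nonpos lap_symbol_nonpos uncurry3_def)
  ultimately have "Lap K v = (\<lambda>_ _ _. 0)"
    unfolding Lap_eq_real_multiplier
    by (intro real_multiplier_eq_0) (auto simp: lap_symbol_nonpos uncurry3_def)
  then show ?thesis
    using \<open>\<gamma> > 0\<close> by (simp add: Lap_v w_def fun_eq_iff)
qed

section \<open>Existence by energy minimization\<close>

definition mean_zero :: "nat \<Rightarrow> grid set" where
  "mean_zero K = {u \<in> grid_space K. gmean K u = 0}"

lemma gmean_linear: "gmean K (\<lambda>i j k. a * f i j k + b * g i j k) = a * gmean K f + b * gmean K g"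
  by (simp add: gmean_def ginner_linear_right[symmetric] ginner_commute[of K _ "\<lambda>_ _ _. 1"])

lemma gmean_const: "gmean K (\<lambda>_ _ _. c) = c"
proof -
  have "card (grid_box K) = Ngrid K ^ 3"
    by (simp add: grid_box_def card_cartesian_product power3_eq_cube)
  then show ?thesis
    using Ngrid_pos[of K] by (simp add: gmean_def ginner_eq_sum uncurry3_def cell_volume_def field_simps)
qed

lemma ginner_const_right: "ginner K f (\<lambda>_ _ _. c) = c * gmean K f"
  by (simp add: gmean_def ginner_eq_sum uncurry3_def sum_distrib_left mult_ac)

lemma mean_zero_add_scaled:
  assumes "u \<in> mean_zero K" "\<psi> \<in> mean_zero K"
  shows "(\<lambda>i j k. u i j k + t * \<psi> i j k) \<in> mean_zero K"
  using assms gmean_linear[of K 1 u t \<psi>] by (simp add: mean_zero_def grid_space_def)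

lemma orthogonal_mean_zero_imp_const:
  assumes "T \<in> grid_space K" and orth: "\<And>\<psi>. \<psi> \<in> mean_zero K \<Longrightarrow> ginner K \<psi> T = 0"
  shows "T = (\<lambda>_ _ _. gmean K T)"
proof -
  define \<psi> where "\<psi> = (\<lambda>i j k. T i j k - gmean K T)"
  have "\<psi> \<in> grid_space K"
    using assms(1) by (simp add: \<psi>_def grid_space_def)
  moreover have "gmean K \<psi> = 0"
    using gmean_linear[of K 1 T "- gmean K T" "\<lambda>_ _ _. 1"] by (simp add: \<psi>_def gmean_const)
  ultimately have "\<psi> \<in> mean_zero K"
    by (simp add: mean_zero_def)
  then have "ginner K \<psi> \<psi> = 0"
    using orth \<open>gmean K \<psi> = 0\<close> by (simp add: \<psi>_def ginner_diff_right ginner_const_right)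
  then have "\<psi> = (\<lambda>_ _ _. 0)"
    using \<open>\<psi> \<in> grid_space K\<close> by (rule ginner_self_eq_0[rotated])
  then show ?thesis
    by (simp add: \<psi>_def fun_eq_iff)
qed

lemma continuous_on_grid_eval [continuous_intros]: "continuous_on S (\<lambda>u :: grid. u i j k)"
proof -
  have "continuous_on S (\<lambda>u :: grid. u)"
    by (rule continuous_on_id)
  then have "continuous_on S (\<lambda>u :: grid. u i)"
    by (rule continuous_on_product_then_coordinatewise)
  then have "continuous_on S (\<lambda>u :: grid. u i j)"
    by (rule continuous_on_product_then_coordinatewise)
  then show ?thesis
    by (rule continuous_on_product_then_coordinatewise)
qed

lemma continuous_on_spec_op [continuous_intros]:
  "(\<And>i j k. continuous_on S (\<lambda>u. F u i j k)) \<Longrightarrow> continuous_on S (\<lambda>u. spec_op K \<sigma> (F u) i j k)"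
  unfolding spec_op_def dft_def by (intro continuous_intros)

lemma continuous_on_ginner [continuous_intros]:
  "(\<And>i j k. continuous_on S (\<lambda>u. F u i j k)) \<Longrightarrow> (\<And>i j k. continuous_on S (\<lambda>u. G u i j k))
    \<Longrightarrow> continuous_on S (\<lambda>u. ginner K (F u) (G u))"
  unfolding ginner_def by (intro continuous_intros)

lemma closed_mean_zero: "closed (mean_zero K)"
proof -
  have "mean_zero K = {u. \<forall>i j k. u (i + int (Ngrid K)) j k = u i j k \<and> u i (j + int (Ngrid K)) k = u i j k
                               \<and> u i j (k + int (Ngrid K)) = u i j k} \<inter> {u. gmean K u = 0}"
    by (auto simp: mean_zero_def grid_space_def)
  also have "closed \<dots>"
    unfolding gmean_def
    by (intro closed_Int closed_Collect_all closed_Collect_conj closed_Collect_eq continuous_intros)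
  finally show ?thesis .
qed

lemma compact_functions_into:
  fixes A :: "'b :: topological_space set"
  assumes "compact A"
  shows "compact {f :: 'a \<Rightarrow> 'b. \<forall>x. f x \<in> A}"
proof -
  have "{f :: 'a \<Rightarrow> 'b. \<forall>x. f x \<in> A} = PiE UNIV (\<lambda>_. A)"
    by (auto simp: PiE_def Pi_def)
  moreover have "compactin (product_topology (\<lambda>_. euclidean) UNIV) (PiE UNIV (\<lambda>_ :: 'a. A))"
    using assms by (simp add: compactin_PiE)
  ultimately show ?thesis
    by (simp add: euclidean_product_topology)
qed

lemma compact_grid_cube: "compact {u :: grid. \<forall>i j k. u i j k \<in> {- R..R}}"
proof -
  have "{u :: grid. \<forall>i j k. u i j k \<in> {- R..R}}
      = {u. \<forall>i. u i \<in> {v. \<forall>j. v j \<in> {w. \<forall>k. w k \<in> {- R..R}}}}"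
    by simp
  then show ?thesis
    by (simp only: compact_functions_into compact_Icc)
qed

lemma ginner_self_gt_outside_cube:
  assumes "f \<in> grid_space K" "R \<ge> 1" "f i j k \<notin> {- R..R}"
  shows "cell_volume K * R < ginner K f f"
proof -
  have "R * 1 < \<bar>f i j k\<bar> * \<bar>f i j k\<bar>"
    using assms(2,3) by (intro mult_strict_mono') auto
  then have "cell_volume K * R < cell_volume K * (f i j k)\<^sup>2"
    using cell_volume_pos[of K] by (simp add: power2_eq_square)
  also have "\<dots> \<le> ginner K f f"
    by (rule ginner_self_ge_point[OF assms(1)])
  finally show ?thesis .
qed

lemma mean_zero_minimizer_exists:
  fixes E :: "grid \<Rightarrow> real"
  assumes cont: "continuous_on (mean_zero K) E" and "\<alpha> > 0"
    and coercive: "\<And>u. u \<in> mean_zero K \<Longrightarrow> \<alpha> * ginner K u u - C \<le> E u"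
  shows "\<exists>u\<in>mean_zero K. \<forall>v\<in>mean_zero K. E u \<le> E v"
proof -
  define z :: grid where "z = (\<lambda>_ _ _. 0)"
  have z: "z \<in> mean_zero K"
    by (simp add: z_def mean_zero_def grid_space_def gmean_const)
  have "\<alpha> * cell_volume K > 0"
    using \<open>\<alpha> > 0\<close> cell_volume_pos[of K] by simp
  define R where "R = 1 + \<bar>E z + C\<bar> / (\<alpha> * cell_volume K)"
  have "R \<ge> 1"
    using \<open>\<alpha> * cell_volume K > 0\<close> by (simp add: R_def)
  define S where "S = mean_zero K \<inter> {u. \<forall>i j k. u i j k \<in> {- R..R}}"
  have "compact S"
    unfolding S_def by (intro closed_Int_compact closed_mean_zero compact_grid_cube)
  moreover have "z \<in> S"
    using z \<open>R \<ge> 1\<close> by (simp add: S_def z_def)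
  moreover have "continuous_on S E"
    using cont by (rule continuous_on_subset) (simp add: S_def)
  ultimately obtain u where "u \<in> S" and u_min: "\<And>v. v \<in> S \<Longrightarrow> E u \<le> E v"
    using continuous_attains_inf[of S E] by blast
  have "E u \<le> E v" if v: "v \<in> mean_zero K" for v
  proof (cases "v \<in> S")
    case False
    then obtain i j k where "v i j k \<notin> {- R..R}"
      using v by (auto simp: S_def)
    then have "\<alpha> * (cell_volume K * R) < \<alpha> * ginner K v v"
      using v \<open>R \<ge> 1\<close> \<open>\<alpha> > 0\<close> ginner_self_gt_outside_cube[of v K R]
      by (simp add: mean_zero_def)
    moreover have "\<alpha> * (cell_volume K * R) = \<alpha> * cell_volume K + \<bar>E z + C\<bar>"
      using \<open>\<alpha> > 0\<close> cell_volume_pos[of K] by (simp add: R_def field_simps)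
    ultimately have "E z < E v"
      using coercive[OF v] \<open>\<alpha> * cell_volume K > 0\<close> by linarith
    moreover have "E u \<le> E z"
      using u_min \<open>z \<in> S\<close> by simp
    ultimately show ?thesis
      by simp
  qed (use u_min in simp)
  then show ?thesis
    using \<open>u \<in> S\<close> by (auto simp: S_def)
qed

lemma ginner_add_scaled_left:
  "ginner K (\<lambda>i j k. f i j k + t * g i j k) h = ginner K f h + t * ginner K g h"
  by (simp add: ginner_commute[of K _ h] ginner_linear_right[of K h 1 f t g, simplified])

lemma ginner_real_multiplier_line:
  "ginner K (real_multiplier K s (\<lambda>i j k. u i j k + t * \<psi> i j k)) (\<lambda>i j k. u i j k + t * \<psi> i j k)
     = ginner K (real_multiplier K s u) u + t * (2 * ginner K (real_multiplier K s u) \<psi>)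
       + t\<^sup>2 * ginner K (real_multiplier K s \<psi>) \<psi>"
proof -
  have "real_multiplier K s (\<lambda>i j k. u i j k + t * \<psi> i j k)
      = (\<lambda>i j k. real_multiplier K s u i j k + t * real_multiplier K s \<psi> i j k)"
    by (simp add: real_multiplier_def spec_op_add_scaled fun_eq_iff)
  moreover have "ginner K (real_multiplier K s \<psi>) u = ginner K (real_multiplier K s u) \<psi>"
    by (simp add: real_multiplier_symmetric ginner_commute[of K u])
  ultimately show ?thesis
    by (simp add: ginner_add_scaled_left ginner_linear_right[of K _ 1 u t \<psi>, simplified]
        power2_eq_square algebra_simps)
qed

lemma has_real_derivative_real_multiplier_form:
  "((\<lambda>t. ginner K (real_multiplier K s (\<lambda>i j k. u i j k + t * \<psi> i j k)) (\<lambda>i j k. u i j k + t * \<psi> i j k))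
     has_real_derivative 2 * ginner K (real_multiplier K s u) \<psi>) (at 0)"
  unfolding ginner_real_multiplier_line by (auto intro!: derivative_eq_intros)

lemma has_real_derivative_ginner_line:
  "((\<lambda>t. ginner K h (\<lambda>i j k. \<phi> i j k + t * \<psi> i j k)) has_real_derivative ginner K h \<psi>) (at 0)"
  unfolding ginner_linear_right[of K h 1 \<phi>, simplified] by (auto intro!: derivative_eq_intros)

lemma has_real_derivative_grad_quartic:
  "((\<lambda>t. ginner K (grad_sq K (\<lambda>i j k. \<phi> i j k + t * \<psi> i j k))
                    (grad_sq K (\<lambda>i j k. \<phi> i j k + t * \<psi> i j k)) / 4)
     has_real_derivative - ginner K \<psi> (plap_term K \<phi>)) (at 0)"
proof -
  have pointwise: "((\<lambda>t. ((X1 + t * Y1)\<^sup>2 + (X2 + t * Y2)\<^sup>2 + (X3 + t * Y3)\<^sup>2)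
                       * ((X1 + t * Y1)\<^sup>2 + (X2 + t * Y2)\<^sup>2 + (X3 + t * Y3)\<^sup>2) / 4)
      has_real_derivative (X1\<^sup>2 + X2\<^sup>2 + X3\<^sup>2) * (Y1 * X1 + Y2 * X2 + Y3 * X3)) (at 0)"
    for X1 X2 X3 Y1 Y2 Y3 :: real
    by (auto intro!: derivative_eq_intros simp: field_simps power2_eq_square)
  have "((\<lambda>t. cell_volume K * (\<Sum>p\<in>grid_box K.
            uncurry3 (grad_sq K (\<lambda>i j k. \<phi> i j k + t * \<psi> i j k)) p
          * uncurry3 (grad_sq K (\<lambda>i j k. \<phi> i j k + t * \<psi> i j k)) p / 4))
      has_real_derivative cell_volume K * (\<Sum>p\<in>grid_box K.
            uncurry3 (grad_sq K \<phi>) p * (uncurry3 (Dx K \<psi>) p * uncurry3 (Dx K \<phi>) p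
          + uncurry3 (Dy K \<psi>) p * uncurry3 (Dy K \<phi>) p + uncurry3 (Dz K \<psi>) p * uncurry3 (Dz K \<phi>) p)))
      (at 0)"
    unfolding grad_sq_def uncurry3_def Dx_def Dy_def Dz_def spec_op_add_scaled
    by (intro DERIV_cmult DERIV_sum pointwise)
  moreover have "cell_volume K * (\<Sum>p\<in>grid_box K.
            uncurry3 (grad_sq K \<phi>) p * (uncurry3 (Dx K \<psi>) p * uncurry3 (Dx K \<phi>) p
          + uncurry3 (Dy K \<psi>) p * uncurry3 (Dy K \<phi>) p + uncurry3 (Dz K \<psi>) p * uncurry3 (Dz K \<phi>) p))
      = - ginner K \<psi> (plap_term K \<phi>)"
    unfolding ginner_plap_term minus_minus
    by (simp add: ginner_eq_sum uncurry3_def sum.distrib algebra_simps)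
  moreover have "ginner K g g / 4 = cell_volume K * (\<Sum>p\<in>grid_box K. uncurry3 g p * uncurry3 g p / 4)"
    for g
    by (simp add: ginner_eq_sum sum_divide_distrib[symmetric])
  ultimately show ?thesis
    by (simp only:)
qed

definition energy :: "nat \<Rightarrow> real \<Rightarrow> symbol \<Rightarrow> grid \<Rightarrow> grid \<Rightarrow> grid \<Rightarrow> real" where
  "energy K \<gamma> s h c u =
     (let \<phi> = (\<lambda>i j k. c i j k + u i j k)
      in \<gamma> / 2 * ginner K (inv_neg_Lap K u) u + ginner K (grad_sq K \<phi>) (grad_sq K \<phi>) / 4
         + ginner K (real_multiplier K s \<phi>) \<phi> / 2 + ginner K h \<phi>)"

lemma continuous_on_energy: "continuous_on S (energy K \<gamma> s h c)"
  unfolding energy_def Let_def inv_neg_Lap_def real_multiplier_def grad_sq_def Dx_def Dy_def Dz_def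
  by (intro continuous_intros) auto

lemma energy_has_real_derivative:
  "((\<lambda>t. energy K \<gamma> s h c (\<lambda>i j k. u i j k + t * \<psi> i j k)) has_real_derivative
      ginner K \<psi> (\<lambda>i j k. \<gamma> * inv_neg_Lap K u i j k
                          + chem_potential K s h (\<lambda>i j k. c i j k + u i j k) i j k)) (at 0)"
proof -
  define \<phi> where "\<phi> = (\<lambda>i j k. c i j k + u i j k)"
  have line: "(\<lambda>i j k. c i j k + (u i j k + t * \<psi> i j k)) = (\<lambda>i j k. \<phi> i j k + t * \<psi> i j k)" for t
    by (simp add: \<phi>_def add.assoc)
  have "((\<lambda>t. energy K \<gamma> s h c (\<lambda>i j k. u i j k + t * \<psi> i j k)) has_real_derivative
      \<gamma> / 2 * (2 * ginner K (inv_neg_Lap K u) \<psi>) + - ginner K \<psi> (plap_term K \<phi>)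
      + 2 * ginner K (real_multiplier K s \<phi>) \<psi> / 2 + ginner K h \<psi>) (at 0)"
    unfolding energy_def Let_def line inv_neg_Lap_def
    by (intro DERIV_add DERIV_cmult DERIV_cdivide has_real_derivative_real_multiplier_form
        has_real_derivative_grad_quartic has_real_derivative_ginner_line)
  moreover have "\<gamma> / 2 * (2 * ginner K (inv_neg_Lap K u) \<psi>) + - ginner K \<psi> (plap_term K \<phi>)
      + 2 * ginner K (real_multiplier K s \<phi>) \<psi> / 2 + ginner K h \<psi>
      = ginner K \<psi> (\<lambda>i j k. \<gamma> * inv_neg_Lap K u i j k + chem_potential K s h \<phi> i j k)"
    by (simp add: chem_potential_def ginner_add_right ginner_diff_right ginner_scale_right
        ginner_uminus_right ginner_commute[of K "inv_neg_Lap K u" \<psi>]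
        ginner_commute[of K "real_multiplier K s \<phi>" \<psi>] ginner_commute[of K h \<psi>])
  ultimately show ?thesis
    by (simp add: \<phi>_def)
qed

lemma ginner_young:
  assumes "e > 0"
  shows "- (e / 2) * ginner K u u - ginner K h h / (2 * e) \<le> ginner K h u"
proof -
  have "- (e / 2) * (y * y) - x * x / (2 * e) \<le> x * y" for x y
  proof -
    have "0 \<le> (e * y + x)\<^sup>2 / (2 * e)"
      using assms by simp
    also have "\<dots> = e / 2 * (y * y) + x * y + x * x / (2 * e)"
      using assms by (simp add: field_simps power2_eq_square)
    finally show ?thesis
      by simp
  qed
  then have "cell_volume K * (\<Sum>p\<in>grid_box K. - (e / 2) * (uncurry3 u p * uncurry3 u p)
                 - uncurry3 h p * uncurry3 h p / (2 * e))
      \<le> cell_volume K * (\<Sum>p\<in>grid_box K. uncurry3 h p * uncurry3 u p)"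
    using cell_volume_pos[of K] by (intro mult_left_mono sum_mono) auto
  then show ?thesis
    by (simp add: ginner_eq_sum sum_subtractf sum_distrib_left sum_divide_distrib algebra_simps)
qed

lemma energy_coercive:
  assumes "\<gamma> > 0" and s_nonneg: "\<And>q. q \<in> mode_box K \<Longrightarrow> uncurry3 s q \<ge> 0"
  obtains \<alpha> C where "\<alpha> > 0"
    and "\<And>u. u \<in> mean_zero K \<Longrightarrow> \<alpha> * ginner K u u - C \<le> energy K \<gamma> s h c u"
proof
  define D where "D = 4 * pi\<^sup>2 * (3 * (real K)\<^sup>2 + 1)"
  have "D > 0"
    unfolding D_def by (intro mult_pos_pos add_nonneg_pos) auto
  define \<alpha> where "\<alpha> = \<gamma> / (4 * D)"
  show "\<alpha> > 0"
    using \<open>\<gamma> > 0\<close> \<open>D > 0\<close> by (simp add: \<alpha>_def)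
  fix u
  assume u: "u \<in> mean_zero K"
  define \<phi> where "\<phi> = (\<lambda>i j k. c i j k + u i j k)"
  have "2 * \<alpha> * ginner K u u = \<gamma> / 2 * (ginner K u u / D)"
    by (simp add: \<alpha>_def)
  also have "\<dots> \<le> \<gamma> / 2 * ginner K (inv_neg_Lap K u) u"
    using inv_neg_Lap_coercive[of u K] u \<open>\<gamma> > 0\<close>
    by (intro mult_left_mono) (auto simp: D_def mean_zero_def)
  finally have "2 * \<alpha> * ginner K u u \<le> \<gamma> / 2 * ginner K (inv_neg_Lap K u) u" .
  moreover have "0 \<le> ginner K (grad_sq K \<phi>) (grad_sq K \<phi>) / 4"
    by (simp add: ginner_self_nonneg)
  moreover have "0 \<le> ginner K (real_multiplier K s \<phi>) \<phi> / 2"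
    using real_multiplier_nonneg[OF s_nonneg] by simp
  moreover have "- (2 * \<alpha> / 2) * ginner K u u - ginner K h h / (2 * (2 * \<alpha>)) \<le> ginner K h u"
    using \<open>\<alpha> > 0\<close> by (intro ginner_young) simp
  moreover have "energy K \<gamma> s h c u = \<gamma> / 2 * ginner K (inv_neg_Lap K u) u
      + ginner K (grad_sq K \<phi>) (grad_sq K \<phi>) / 4 + ginner K (real_multiplier K s \<phi>) \<phi> / 2
      + (ginner K h c + ginner K h u)"
    by (simp add: energy_def Let_def \<phi>_def ginner_add_right)
  ultimately show "\<alpha> * ginner K u u - (ginner K h h / (2 * (2 * \<alpha>)) - ginner K h c) \<le> energy K \<gamma> s h c u"
    by linarith
qed

lemma spec_op_shift [simp]:
  "spec_op K \<sigma> f (i + int (Ngrid K)) j k = spec_op K \<sigma> f i j k"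
  "spec_op K \<sigma> f i (j + int (Ngrid K)) k = spec_op K \<sigma> f i j k"
  "spec_op K \<sigma> f i j (k + int (Ngrid K)) = spec_op K \<sigma> f i j k"
  using spec_op_in_grid_space[of K \<sigma> f] by (simp_all add: grid_space_def)

lemma energy_minimizer_orthogonal:
  assumes "u \<in> mean_zero K"
    and u_min: "\<And>v. v \<in> mean_zero K \<Longrightarrow> energy K \<gamma> s h c u \<le> energy K \<gamma> s h c v"
    and "\<psi> \<in> mean_zero K"
  shows "ginner K \<psi> (\<lambda>i j k. \<gamma> * inv_neg_Lap K u i j k
                               + chem_potential K s h (\<lambda>i j k. c i j k + u i j k) i j k) = 0"
proof (rule DERIV_local_min[OF energy_has_real_derivative, where d = 1])
  show "\<forall>t. \<bar>0 - t\<bar> < 1 \<longrightarrow> energy K \<gamma> s h c (\<lambda>i j k. u i j k + 0 * \<psi> i j k)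
                            \<le> energy K \<gamma> s h c (\<lambda>i j k. u i j k + t * \<psi> i j k)"
    using u_min mean_zero_add_scaled[OF assms(1,3)] by simp
qed simp

lemma reduced_scheme_of_orthogonal:
  assumes "h \<in> grid_space K" "u \<in> mean_zero K"
    and orth: "\<And>\<psi>. \<psi> \<in> mean_zero K \<Longrightarrow> ginner K \<psi> (\<lambda>i j k. \<gamma> * inv_neg_Lap K u i j k
                               + chem_potential K s h (\<lambda>i j k. c i j k + u i j k) i j k) = 0"
  shows "reduced_scheme K \<gamma> s h c (\<lambda>i j k. c i j k + u i j k)"
proof -
  define \<phi> where "\<phi> = (\<lambda>i j k. c i j k + u i j k)"
  define T where "T = (\<lambda>i j k. \<gamma> * inv_neg_Lap K u i j k + chem_potential K s h \<phi> i j k)"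
  have "T \<in> grid_space K"
    using assms(1)
    by (simp add: grid_space_def T_def chem_potential_def plap_term_def Let_def ndiv_def
        inv_neg_Lap_def real_multiplier_def Dx_def Dy_def Dz_def)
  then have "T = (\<lambda>_ _ _. gmean K T)"
    using orth by (intro orthogonal_mean_zero_imp_const) (simp_all add: T_def \<phi>_def)
  then have "Lap K T i j k = 0" for i j k
    by (metis Lap_const)
  moreover have "Lap K T i j k = \<gamma> * Lap K (inv_neg_Lap K u) i j k + Lap K (chem_potential K s h \<phi>) i j k"
    for i j k
    using spec_op_linear[of K _ \<gamma> "inv_neg_Lap K u" 1 "chem_potential K s h \<phi>" i j k]
    by (simp add: T_def Lap_def)
  moreover have "Lap K (inv_neg_Lap K u) i j k = - u i j k" for i j k
    using Lap_inv_neg_Lap[of u K i j k] assms(2) by (simp add: mean_zero_def)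
  ultimately show ?thesis
    by (simp add: reduced_scheme_def fun_eq_iff \<phi>_def)
qed

lemma reduced_scheme_exists:
  assumes "\<gamma> > 0" and s_nonneg: "\<And>q. q \<in> mode_box K \<Longrightarrow> uncurry3 s q \<ge> 0"
    and "h \<in> grid_space K" "c \<in> grid_space K"
  shows "\<exists>\<phi>\<in>grid_space K. reduced_scheme K \<gamma> s h c \<phi>"
proof -
  obtain \<alpha> C where "\<alpha> > 0"
    and coercive: "\<And>u. u \<in> mean_zero K \<Longrightarrow> \<alpha> * ginner K u u - C \<le> energy K \<gamma> s h c u"
    using energy_coercive[OF assms(1,2)] by blast
  then obtain u where u: "u \<in> mean_zero K"
    and u_min: "\<And>v. v \<in> mean_zero K \<Longrightarrow> energy K \<gamma> s h c u \<le> energy K \<gamma> s h c v"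
    using mean_zero_minimizer_exists[OF continuous_on_energy \<open>\<alpha> > 0\<close> coercive] by blast
  have "reduced_scheme K \<gamma> s h c (\<lambda>i j k. c i j k + u i j k)"
    using assms(3) u energy_minimizer_orthogonal[OF u u_min] by (rule reduced_scheme_of_orthogonal)
  moreover have "(\<lambda>i j k. c i j k + u i j k) \<in> grid_space K"
    using assms(4) u by (simp add: mean_zero_def grid_space_def)
  ultimately show ?thesis
    by blast
qed

section \<open>The two schemes\<close>

definition lap_poly_symbol :: "real \<Rightarrow> real \<Rightarrow> real \<Rightarrow> symbol" where
  "lap_poly_symbol a b c l m n = a + b * lap_symbol l m n + c * (lap_symbol l m n)\<^sup>2"

lemma real_multiplier_lap_poly:
  assumes "\<phi> \<in> grid_space K"
  shows "real_multiplier K (lap_poly_symbol a b c) \<phi> i j k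
       = a * \<phi> i j k + b * Lap K \<phi> i j k + c * Lap K (Lap K \<phi>) i j k"
proof -
  have "(\<lambda>l m n. complex_of_real (lap_poly_symbol a b c l m n))
      = (\<lambda>l m n. complex_of_real 1 * complex_of_real a
           + complex_of_real 1 * (complex_of_real b * complex_of_real (lap_symbol l m n)
                                  + complex_of_real c * complex_of_real ((lap_symbol l m n)\<^sup>2)))"
    by (simp add: lap_poly_symbol_def fun_eq_iff)
  then have "real_multiplier K (lap_poly_symbol a b c) \<phi> i j k
      = a * \<phi> i j k + b * real_multiplier K lap_symbol \<phi> i j k
        + c * real_multiplier K (\<lambda>l m n. (lap_symbol l m n)\<^sup>2) \<phi> i j k"
    by (simp only: real_multiplier_def spec_op_symbol_linear spec_op_constant_symbol[OF assms]
        mult_1_left add.assoc)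
  then show ?thesis
    by (simp only: Lap_Lap) (simp only: Lap_eq_real_multiplier)
qed

definition scheme_symbol :: "nat \<Rightarrow> real \<Rightarrow> real \<Rightarrow> real \<Rightarrow> symbol" where
  "scheme_symbol s dt eps A =
     (if s = 1 then lap_poly_symbol (1 - eps) (- A * dt) 1 else lap_poly_symbol 1 (2 - A * dt) 1)"

definition scheme_source :: "nat \<Rightarrow> nat \<Rightarrow> real \<Rightarrow> real \<Rightarrow> real \<Rightarrow> grid \<Rightarrow> grid \<Rightarrow> grid" where
  "scheme_source s K dt eps A \<phi>k \<phi>km1 =
     (if s = 1
      then (\<lambda>i j k. 2 * Lap K (\<lambda>i j k. 2 * \<phi>k i j k - \<phi>km1 i j k) i j k + A * dt * Lap K \<phi>k i j k)
      else (\<lambda>i j k. - eps * (2 * \<phi>k i j k - \<phi>km1 i j k) + A * dt * Lap K \<phi>k i j k))"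

definition bdf2_history :: "grid \<Rightarrow> grid \<Rightarrow> grid" where
  "bdf2_history \<phi>k \<phi>km1 = (\<lambda>i j k. (4 * \<phi>k i j k - \<phi>km1 i j k) / 3)"

lemma scheme_symbol_nonneg:
  assumes "dt > 0" "eps < 1" "A \<ge> 0"
  shows "scheme_symbol s dt eps A l m n \<ge> 0"
proof -
  have "- A * dt * lap_symbol l m n \<ge> 0"
    using assms lap_symbol_nonpos[of l m n] by (simp add: mult_nonneg_nonpos)
  moreover have "lap_poly_symbol (1 - eps) (- A * dt) 1 l m n
      = 1 - eps + - A * dt * lap_symbol l m n + (lap_symbol l m n)\<^sup>2"
    by (simp add: lap_poly_symbol_def)
  moreover have "lap_poly_symbol 1 (2 - A * dt) 1 l m n
      = (1 + lap_symbol l m n)\<^sup>2 + - A * dt * lap_symbol l m n"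
    by (simp add: lap_poly_symbol_def power2_eq_square algebra_simps)
  moreover have "0 \<le> (lap_symbol l m n)\<^sup>2" "0 \<le> (1 + lap_symbol l m n)\<^sup>2"
    by simp_all
  ultimately have "0 \<le> lap_poly_symbol (1 - eps) (- A * dt) 1 l m n"
    and "0 \<le> lap_poly_symbol 1 (2 - A * dt) 1 l m n"
    using assms(2) by linarith+
  then show ?thesis
    by (simp add: scheme_symbol_def)
qed

lemma scheme_iff_reduced_scheme:
  assumes "\<phi> \<in> grid_space K" "dt > 0"
  shows "scheme s K dt eps A \<phi> \<phi>k \<phi>km1 \<longleftrightarrow>
    reduced_scheme K (3 / (2 * dt)) (scheme_symbol s dt eps A) (scheme_source s K dt eps A \<phi>k \<phi>km1)
      (bdf2_history \<phi>k \<phi>km1) \<phi>"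
proof -
  have "mu_scheme s K dt eps A \<phi> \<phi>k \<phi>km1
      = chem_potential K (scheme_symbol s dt eps A) (scheme_source s K dt eps A \<phi>k \<phi>km1) \<phi>"
    by (cases "s = 1")
       (simp_all add: fun_eq_iff mu_scheme_def mu1_def mu2_def chem_potential_def scheme_symbol_def
         scheme_source_def real_multiplier_lap_poly[OF assms(1)] Lap_def spec_op_diff algebra_simps)
  moreover have "(\<lambda>i j k. (3 / 2 * \<phi> i j k - 2 * \<phi>k i j k + 1 / 2 * \<phi>km1 i j k) / dt)
      = (\<lambda>i j k. 3 / (2 * dt) * (\<phi> i j k - bdf2_history \<phi>k \<phi>km1 i j k))"
    using assms(2) by (simp add: fun_eq_iff bdf2_history_def field_simps)
  ultimately show ?thesis
    by (simp add: scheme_def reduced_scheme_def eq_commute)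
qed

lemma scheme_mean:
  assumes "scheme s K dt eps A \<phi> \<phi>k \<phi>km1" "dt > 0"
  shows "3 * gmean K \<phi> - 4 * gmean K \<phi>k + gmean K \<phi>km1 = 0"
proof -
  have "gmean K (\<lambda>i j k. (3 / 2 * \<phi> i j k - 2 * \<phi>k i j k + 1 / 2 * \<phi>km1 i j k) / dt) = 0"
    using assms(1) gmean_Lap by (simp add: scheme_def)
  moreover have "gmean K (\<lambda>i j k. (3 / 2 * \<phi> i j k - 2 * \<phi>k i j k + 1 / 2 * \<phi>km1 i j k) / dt)
      = (3 / 2 * gmean K \<phi> - 2 * gmean K \<phi>k + 1 / 2 * gmean K \<phi>km1) / dt"
    by (simp add: gmean_def ginner_eq_sum uncurry3_def sum.distrib sum_subtractf
        sum_divide_distrib[symmetric] sum_distrib_left[symmetric] algebra_simps)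
  ultimately show ?thesis
    using assms(2) by simp
qed

lemma bdf2_recurrence_const:
  fixes m :: "int \<Rightarrow> real"
  assumes "\<And>k. k \<ge> 0 \<Longrightarrow> 3 * m (k + 1) - 4 * m k + m (k - 1) = 0"
    and "m 0 = \<beta>" "m (- 1) = \<beta>" "k \<ge> 0"
  shows "m k = \<beta>"
proof -
  have "m k = \<beta> \<and> m (k - 1) = \<beta>"
    using \<open>k \<ge> 0\<close>
  proof (induction k rule: int_ge_induct)
    case (step k)
    then show ?case
      using assms(1)[of k] by simp
  qed (simp add: assms(2,3))
  then show ?thesis
    by simp
qed

lemma scheme_unique_solution:
  assumes "dt > 0" "eps < 1" "A \<ge> 0" "\<phi>k \<in> grid_space K" "\<phi>km1 \<in> grid_space K"
  shows "\<exists>!\<phi>. \<phi> \<in> grid_space K \<and> scheme s K dt eps A \<phi> \<phi>k \<phi>km1"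
proof -
  let ?reduced = "reduced_scheme K (3 / (2 * dt)) (scheme_symbol s dt eps A)
                    (scheme_source s K dt eps A \<phi>k \<phi>km1) (bdf2_history \<phi>k \<phi>km1)"
  have \<gamma>: "3 / (2 * dt) > 0" and symbol: "\<And>q. uncurry3 (scheme_symbol s dt eps A) q \<ge> 0"
    using assms(1-3) scheme_symbol_nonneg by (simp_all add: uncurry3_def)
  have "scheme_source s K dt eps A \<phi>k \<phi>km1 \<in> grid_space K" "bdf2_history \<phi>k \<phi>km1 \<in> grid_space K"
    using assms(4,5) by (simp_all add: scheme_source_def bdf2_history_def Lap_def grid_space_def)
  then obtain \<phi> where "\<phi> \<in> grid_space K" "?reduced \<phi>"
    using reduced_scheme_exists[OF \<gamma> symbol] by blast
  moreover have "\<psi> = \<phi>" if "?reduced \<psi>" for \<psi>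
    using reduced_scheme_unique[OF \<gamma> symbol that \<open>?reduced \<phi>\<close>] .
  ultimately show ?thesis
    using scheme_iff_reduced_scheme[OF _ assms(1)] by blast
qed

lemma scheme_conserves_mass:
  fixes \<Phi> :: "int \<Rightarrow> grid"
  assumes "dt > 0" and steps: "\<And>k. k \<ge> 0 \<Longrightarrow> scheme s K dt eps A (\<Phi> (k + 1)) (\<Phi> k) (\<Phi> (k - 1))"
    and "gmean K (\<Phi> 0) = \<beta>" "gmean K (\<Phi> (- 1)) = \<beta>" "k \<ge> 0"
  shows "gmean K (\<Phi> k) = \<beta>"
proof (rule bdf2_recurrence_const[where m = "\<lambda>k. gmean K (\<Phi> k)"])
  show "3 * gmean K (\<Phi> (j + 1)) - 4 * gmean K (\<Phi> j) + gmean K (\<Phi> (j - 1)) = 0" if "j \<ge> 0" for j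
    using scheme_mean[OF steps[OF that] assms(1)] .
qed (use assms(3-5) in simp_all)

theorem theorem3p1:
  fixes K :: nat and dt eps A :: real and \<phi>k \<phi>km1 :: grid
  assumes "dt > 0" and "0 < eps" and "eps < 1" and "A \<ge> 0"
    and "\<phi>k \<in> grid_space K" and "\<phi>km1 \<in> grid_space K"
    and "gmean K \<phi>k = gmean K \<phi>km1"
  shows "(\<forall>s\<in>{1, 2}. \<exists>!\<phi>. \<phi> \<in> grid_space K \<and> scheme s K dt eps A \<phi> \<phi>k \<phi>km1)
       \<and> (\<forall>s\<in>{1, 2}. \<forall>(\<Phi> :: int \<Rightarrow> grid) \<beta>0.
            (\<forall>k \<ge> -1. \<Phi> k \<in> grid_space K) \<and>
            (\<forall>k \<ge> 0. scheme s K dt eps A (\<Phi> (k + 1)) (\<Phi> k) (\<Phi> (k - 1))) \<and>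
            gmean K (\<Phi> 0) = \<beta>0 \<and> gmean K (\<Phi> (-1)) = \<beta>0
            \<longrightarrow> (\<forall>k \<ge> 0. gmean K (\<Phi> k) = \<beta>0))"
  using scheme_unique_solution[OF assms(1,3,4,5,6)] scheme_conserves_mass[OF assms(1)] by blast

end
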